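(* Let $K$ be a field of characteristic zero, $g\ge 3$ and $c\ge 3$. Then $\alpha(M_{g,c})=\dim M_{g,c}-g$.
   Context: Lower central series: $\mathfrak{h}^1=\mathfrak{h}$, $\mathfrak{h}^{k+1}=[\mathfrak{h},\mathfrak{h}^k]$. $F_g$ is the free Lie algebra over $K$ on $g$ generators, $F_{g,c}=F_g/F_g^{c+1}$, and $M_{g,c}:=F_{g,c}/[F_{g,c}^2,F_{g,c}^2]$. $\alpha(\mathfrak{h})$ is the maximal dimension of an abelian subalgebra of $\mathfrak{h}$. *)

theory Defs
  imports Main "HOL-Library.Extended_Nat"
begin

record ('a, 'k) lie_alg =
  la_carrier :: "'a set"
  la_add :: "'a \<Rightarrow> 'a \<Rightarrow> 'a"
  la_zero :: 'a
  la_smult :: "'k \<Rightarrow> 'a \<Rightarrow> 'a"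
  la_brk :: "'a \<Rightarrow> 'a \<Rightarrow> 'a"

definition lsubspace :: "('a, 'k) lie_alg \<Rightarrow> 'a set \<Rightarrow> bool" where
  "lsubspace L S \<longleftrightarrow> S \<subseteq> la_carrier L \<and> la_zero L \<in> S
     \<and> (\<forall>x\<in>S. \<forall>y\<in>S. la_add L x y \<in> S) \<and> (\<forall>a x. x \<in> S \<longrightarrow> la_smult L a x \<in> S)"

definition lspan :: "('a, 'k) lie_alg \<Rightarrow> 'a set \<Rightarrow> 'a set" where
  "lspan L X = \<Inter>{S. lsubspace L S \<and> X \<subseteq> S}"

definition brset :: "('a, 'k) lie_alg \<Rightarrow> 'a set \<Rightarrow> 'a set \<Rightarrow> 'a set" where
  "brset L A B = lspan L {la_brk L a b | a b. a \<in> A \<and> b \<in> B}"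

text \<open>Lower central series: lcs L 1 = L, lcs L (k+1) = [L, lcs L k] (k >= 1); lcs L 0 is junk (= L).\<close>
fun lcs :: "('a, 'k) lie_alg \<Rightarrow> nat \<Rightarrow> 'a set" where
  "lcs L 0 = la_carrier L"
| "lcs L (Suc n) = (if n = 0 then la_carrier L else brset L (la_carrier L) (lcs L n))"

definition lideal :: "('a, 'k) lie_alg \<Rightarrow> 'a set \<Rightarrow> bool" where
  "lideal L I \<longleftrightarrow> lsubspace L I \<and>
     (\<forall>x\<in>la_carrier L. \<forall>y\<in>I. la_brk L x y \<in> I \<and> la_brk L y x \<in> I)"

definition ideal_gen :: "('a, 'k) lie_alg \<Rightarrow> 'a set \<Rightarrow> 'a set" where
  "ideal_gen L X = \<Inter>{I. lideal L I \<and> X \<subseteq> I}"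

definition coset :: "('a, 'k) lie_alg \<Rightarrow> 'a set \<Rightarrow> 'a \<Rightarrow> 'a set" where
  "coset L I x = {y. \<exists>i\<in>I. y = la_add L x i}"

definition rep :: "'a set \<Rightarrow> 'a" where
  "rep C = (SOME x. x \<in> C)"

definition quot :: "('a, 'k) lie_alg \<Rightarrow> 'a set \<Rightarrow> ('a set, 'k) lie_alg" where
  "quot L I = \<lparr> la_carrier = coset L I ` la_carrier L,
      la_add = (\<lambda>C D. coset L I (la_add L (rep C) (rep D))),
      la_zero = coset L I (la_zero L),
      la_smult = (\<lambda>a C. coset L I (la_smult L a (rep C))),
      la_brk = (\<lambda>C D. coset L I (la_brk L (rep C) (rep D))) \<rparr>"

definition lincomb :: "('a, 'k) lie_alg \<Rightarrow> ('a \<Rightarrow> 'k) \<Rightarrow> 'a list \<Rightarrow> 'a" where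
  "lincomb L c xs = foldr (\<lambda>x acc. la_add L (la_smult L (c x) x) acc) xs (la_zero L)"

definition lin_indep :: "('a, 'k::zero) lie_alg \<Rightarrow> 'a list \<Rightarrow> bool" where
  "lin_indep L xs \<longleftrightarrow> distinct xs \<and> set xs \<subseteq> la_carrier L \<and>
     (\<forall>c. lincomb L c xs = la_zero L \<longrightarrow> (\<forall>x\<in>set xs. c x = 0))"

definition ldim :: "('a, 'k::zero) lie_alg \<Rightarrow> 'a set \<Rightarrow> enat" where
  "ldim L S = Sup {enat (length xs) | xs. lin_indep L xs \<and> set xs \<subseteq> S}"

definition abelian_subalg :: "('a, 'k) lie_alg \<Rightarrow> 'a set \<Rightarrow> bool" where
  "abelian_subalg L S \<longleftrightarrow> lsubspace L S \<and> (\<forall>x\<in>S. \<forall>y\<in>S. la_brk L x y = la_zero L)"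

definition alpha :: "('a, 'k::zero) lie_alg \<Rightarrow> enat" where
  "alpha L = Sup {ldim L S | S. abelian_subalg L S}"

section \<open>Free Lie algebra: free non-associative algebra modulo antisymmetry and Jacobi\<close>

datatype magma = Gen nat | Mul magma magma

fun mgens :: "magma \<Rightarrow> nat set" where
  "mgens (Gen i) = {i}"
| "mgens (Mul a b) = mgens a \<union> mgens b"

definition mag_mult :: "(magma \<Rightarrow> 'k::semiring_0) \<Rightarrow> (magma \<Rightarrow> 'k) \<Rightarrow> magma \<Rightarrow> 'k" where
  "mag_mult p q = (\<lambda>t. case t of Gen _ \<Rightarrow> 0 | Mul a b \<Rightarrow> p a * q b)"

text \<open>Free non-associative algebra over K on generators Gen 0, ..., Gen (g-1):
  finitely supported K-linear combinations of non-associative monomials.\<close>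
definition free_mag :: "nat \<Rightarrow> (magma \<Rightarrow> 'k::field, 'k) lie_alg" where
  "free_mag g = \<lparr> la_carrier = {p. finite {t. p t \<noteq> 0} \<and> (\<forall>t. p t \<noteq> 0 \<longrightarrow> mgens t \<subseteq> {..<g})},
      la_add = (\<lambda>p q t. p t + q t),
      la_zero = (\<lambda>t. 0),
      la_smult = (\<lambda>a p t. a * p t),
      la_brk = mag_mult \<rparr>"

definition lie_relations :: "nat \<Rightarrow> (magma \<Rightarrow> 'k::field) set" where
  "lie_relations g = (let A = free_mag g; m = la_brk A; ad = la_add A in
     {m p p | p. p \<in> la_carrier A} \<union>
     {ad (ad (m p (m q r)) (m q (m r p))) (m r (m p q)) | p q r.
        p \<in> la_carrier A \<and> q \<in> la_carrier A \<and> r \<in> la_carrier A})"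

definition free_lie :: "nat \<Rightarrow> ((magma \<Rightarrow> 'k::field) set, 'k) lie_alg" where
  "free_lie g = quot (free_mag g) (ideal_gen (free_mag g) (lie_relations g))"

definition F_gc :: "nat \<Rightarrow> nat \<Rightarrow> ((magma \<Rightarrow> 'k::field) set set, 'k) lie_alg" where
  "F_gc g c = quot (free_lie g) (lcs (free_lie g) (c + 1))"

definition M_gc :: "nat \<Rightarrow> nat \<Rightarrow> ((magma \<Rightarrow> 'k::field) set set set, 'k) lie_alg" where
  "M_gc g c = (let F = F_gc g c in quot F (brset F (lcs F 2) (lcs F 2)))"

end

(*
  Let x_1, ..., x_g be the generators of M = M_{g,c} and F = F_{g,c}. An element of M without
  linear part lifts to F^2, and M = F / [F^2, F^2]; so these elements form an abelian
  subalgebra of codimension g, and alpha(M) >= dim M - g.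

  Conversely let S be abelian. If no element of S has a linear part, S meets the span of the
  generators trivially, whence dim S + g <= dim M. Otherwise some x in S has a nonzero
  x_i-coefficient. The elements of S without x_i-coefficient form a hyperplane S' of S, and
  as they commute with x their whole linear part vanishes. For j /= i, the coefficient of
  x_i x_i x_j in [x, [x_i, x_j]] equals the x_i-coefficient of x, while [x, S'] = 0; hence
  S' + K [x_i, x_j] has dimension dim S, no linear part, and again meets the span of the
  generators trivially.

  Linear parts and these coefficients are read off by mapping M to the tensor algebra
  truncated in degree 3, with the commutator bracket; this is possible because c >= 3.
*)

theory Submission
  imports Defs
begin

section \<open>Algebras with a bilinear bracket\<close>

locale bilinear_alg =
  fixes L :: "('a, 'k::field) lie_alg"
  assumes zero_closed[simp]: "la_zero L \<in> la_carrier L"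
    and add_closed[simp]: "x \<in> la_carrier L \<Longrightarrow> y \<in> la_carrier L \<Longrightarrow> la_add L x y \<in> la_carrier L"
    and scale_closed[simp]: "x \<in> la_carrier L \<Longrightarrow> la_smult L a x \<in> la_carrier L"
    and brk_closed[simp]: "x \<in> la_carrier L \<Longrightarrow> y \<in> la_carrier L \<Longrightarrow> la_brk L x y \<in> la_carrier L"
    and add_assoc: "x \<in> la_carrier L \<Longrightarrow> y \<in> la_carrier L \<Longrightarrow> z \<in> la_carrier L \<Longrightarrow>
      la_add L (la_add L x y) z = la_add L x (la_add L y z)"
    and add_comm: "x \<in> la_carrier L \<Longrightarrow> y \<in> la_carrier L \<Longrightarrow> la_add L x y = la_add L y x"
    and zero_add[simp]: "x \<in> la_carrier L \<Longrightarrow> la_add L (la_zero L) x = x"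
    and scale_add: "x \<in> la_carrier L \<Longrightarrow> y \<in> la_carrier L \<Longrightarrow>
      la_smult L a (la_add L x y) = la_add L (la_smult L a x) (la_smult L a y)"
    and add_scale: "x \<in> la_carrier L \<Longrightarrow> la_smult L (a + b) x = la_add L (la_smult L a x) (la_smult L b x)"
    and mult_scale: "x \<in> la_carrier L \<Longrightarrow> la_smult L (a * b) x = la_smult L a (la_smult L b x)"
    and one_scale[simp]: "x \<in> la_carrier L \<Longrightarrow> la_smult L 1 x = x"
    and zero_scale[simp]: "x \<in> la_carrier L \<Longrightarrow> la_smult L 0 x = la_zero L"
    and brk_add_left: "x \<in> la_carrier L \<Longrightarrow> y \<in> la_carrier L \<Longrightarrow> z \<in> la_carrier L \<Longrightarrow>
      la_brk L (la_add L x y) z = la_add L (la_brk L x z) (la_brk L y z)"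
    and brk_add_right: "x \<in> la_carrier L \<Longrightarrow> y \<in> la_carrier L \<Longrightarrow> z \<in> la_carrier L \<Longrightarrow>
      la_brk L x (la_add L y z) = la_add L (la_brk L x y) (la_brk L x z)"
    and brk_scale_left: "x \<in> la_carrier L \<Longrightarrow> y \<in> la_carrier L \<Longrightarrow>
      la_brk L (la_smult L a x) y = la_smult L a (la_brk L x y)"
    and brk_scale_right: "x \<in> la_carrier L \<Longrightarrow> y \<in> la_carrier L \<Longrightarrow>
      la_brk L x (la_smult L a y) = la_smult L a (la_brk L x y)"
begin

abbreviation "C \<equiv> la_carrier L"
abbreviation "vadd \<equiv> la_add L"
abbreviation "vscale \<equiv> la_smult L"
abbreviation "vzero \<equiv> la_zero L"
abbreviation "brk \<equiv> la_brk L"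

lemma add_zero[simp]: "x \<in> C \<Longrightarrow> vadd x vzero = x"
  using add_comm[of x vzero] by simp

lemma add_left_commute: "x \<in> C \<Longrightarrow> y \<in> C \<Longrightarrow> z \<in> C \<Longrightarrow> vadd x (vadd y z) = vadd y (vadd x z)"
  using add_assoc[of x y z] add_assoc[of y x z] add_comm[of x y] by simp

lemma add_neg[simp]: "x \<in> C \<Longrightarrow> vadd x (vscale (-1) x) = vzero"
  using add_scale[of x 1 "-1"] by simp

lemma neg_add[simp]: "x \<in> C \<Longrightarrow> vadd (vscale (-1) x) x = vzero"
  using add_comm[of x "vscale (-1) x"] by simp

lemma scale_zero[simp]: "vscale a vzero = vzero"
  using mult_scale[of vzero a 0] by simp

lemma brk_zero_right[simp]: "x \<in> C \<Longrightarrow> brk x vzero = vzero"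
  using brk_scale_right[of x vzero 0] by simp

lemma brk_zero_left[simp]: "x \<in> C \<Longrightarrow> brk vzero x = vzero"
  using brk_scale_left[of vzero x 0] by simp

lemma add_eq_zero_imp_neg:
  assumes "x \<in> C" "y \<in> C" "vadd x y = vzero"
  shows "y = vscale (-1) x"
proof -
  have "y = vadd (vadd (vscale (-1) x) x) y" using assms by simp
  also have "\<dots> = vadd (vscale (-1) x) (vadd x y)" using assms by (intro add_assoc) auto
  finally show ?thesis using assms by simp
qed

lemma lsubspace_carrier: "lsubspace L C"
  by (simp add: lsubspace_def)

lemma lsubspace_subset: "lsubspace L S \<Longrightarrow> S \<subseteq> C"
  unfolding lsubspace_def by blast

lemma lsubspace_add: "lsubspace L S \<Longrightarrow> x \<in> S \<Longrightarrow> y \<in> S \<Longrightarrow> vadd x y \<in> S"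
  unfolding lsubspace_def by simp

lemma lsubspace_scale: "lsubspace L S \<Longrightarrow> x \<in> S \<Longrightarrow> vscale a x \<in> S"
  unfolding lsubspace_def by simp

lemma lsubspace_zero: "lsubspace L S \<Longrightarrow> vzero \<in> S"
  unfolding lsubspace_def by simp

lemma lsubspace_Inter: "F \<noteq> {} \<Longrightarrow> (\<And>S. S \<in> F \<Longrightarrow> lsubspace L S) \<Longrightarrow> lsubspace L (\<Inter>F)"
  unfolding lsubspace_def by (auto simp: Inter_iff) (meson subsetD ex_in_conv)

lemma lspan_subspace: "X \<subseteq> C \<Longrightarrow> lsubspace L (lspan L X)"
  unfolding lspan_def by (rule lsubspace_Inter) (use lsubspace_carrier in auto)

lemma lspan_least: "lsubspace L W \<Longrightarrow> X \<subseteq> W \<Longrightarrow> lspan L X \<subseteq> W"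
  unfolding lspan_def by (rule Inter_lower) simp

lemma lspan_superset: "X \<subseteq> lspan L X"
  unfolding lspan_def by (rule Inter_greatest) simp

lemma brset_subspace: "A \<subseteq> C \<Longrightarrow> B \<subseteq> C \<Longrightarrow> lsubspace L (brset L A B)"
  unfolding brset_def by (rule lspan_subspace) (blast intro: brk_closed)

lemma brk_in_brset: "a \<in> A \<Longrightarrow> b \<in> B \<Longrightarrow> brk a b \<in> brset L A B"
  unfolding brset_def by (rule subsetD[OF lspan_superset]) blast

lemma lideal_carrier: "lideal L C"
  by (simp add: lideal_def lsubspace_carrier)

lemma lideal_subspace: "lideal L I \<Longrightarrow> lsubspace L I"
  by (simp add: lideal_def)

lemma ideal_gen_lideal:
  assumes "X \<subseteq> C"
  shows "lideal L (ideal_gen L X)"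
proof -
  let ?F = "{I. lideal L I \<and> X \<subseteq> I}"
  have "?F \<noteq> {}" using lideal_carrier assms by blast
  then have "lsubspace L (\<Inter>?F)" by (rule lsubspace_Inter) (auto simp: lideal_def)
  moreover have "\<forall>x\<in>C. \<forall>y\<in>\<Inter>?F. brk x y \<in> \<Inter>?F \<and> brk y x \<in> \<Inter>?F"
  proof (intro ballI conjI InterI)
    fix x y I assume "x \<in> C" "y \<in> \<Inter>?F" "I \<in> ?F"
    then show "brk x y \<in> I" "brk y x \<in> I" by (auto simp: lideal_def)
  qed
  ultimately show ?thesis
    unfolding ideal_gen_def lideal_def by blast
qed

lemma ideal_gen_superset: "X \<subseteq> ideal_gen L X"
  unfolding ideal_gen_def by (rule Inter_greatest) simp

lemma ideal_gen_least: "lideal L I \<Longrightarrow> X \<subseteq> I \<Longrightarrow> ideal_gen L X \<subseteq> I"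
  unfolding ideal_gen_def by (rule Inter_lower) simp

end

section \<open>Homomorphisms and quotients\<close>

definition alg_hom :: "('a, 'k) lie_alg \<Rightarrow> ('b, 'k) lie_alg \<Rightarrow> ('a \<Rightarrow> 'b) \<Rightarrow> bool" where
  "alg_hom L T f \<longleftrightarrow> (\<forall>x\<in>la_carrier L. f x \<in> la_carrier T) \<and> f (la_zero L) = la_zero T \<and>
     (\<forall>x\<in>la_carrier L. \<forall>y\<in>la_carrier L. f (la_add L x y) = la_add T (f x) (f y)) \<and>
     (\<forall>a. \<forall>x\<in>la_carrier L. f (la_smult L a x) = la_smult T a (f x)) \<and>
     (\<forall>x\<in>la_carrier L. \<forall>y\<in>la_carrier L. f (la_brk L x y) = la_brk T (f x) (f y))"

lemma alg_homD:
  assumes "alg_hom L T f"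
  shows "x \<in> la_carrier L \<Longrightarrow> f x \<in> la_carrier T"
    and "f (la_zero L) = la_zero T"
    and "x \<in> la_carrier L \<Longrightarrow> y \<in> la_carrier L \<Longrightarrow> f (la_add L x y) = la_add T (f x) (f y)"
    and "x \<in> la_carrier L \<Longrightarrow> f (la_smult L a x) = la_smult T a (f x)"
    and "x \<in> la_carrier L \<Longrightarrow> y \<in> la_carrier L \<Longrightarrow> f (la_brk L x y) = la_brk T (f x) (f y)"
  using assms unfolding alg_hom_def by auto

lemma alg_hom_comp: "alg_hom L1 L2 f \<Longrightarrow> alg_hom L2 L3 h \<Longrightarrow> alg_hom L1 L3 (h \<circ> f)"
  unfolding alg_hom_def by (simp add: o_def)

lemma (in bilinear_alg) bilinear_alg_image:
  assumes f: "alg_hom L T f" and onto: "f ` C = la_carrier T"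
  shows "bilinear_alg T"
proof -
  note h = alg_homD[OF f]
  have ex: "\<And>u. u \<in> la_carrier T \<Longrightarrow> \<exists>x\<in>C. u = f x" using onto by auto
  show ?thesis
  proof
    show "la_zero T \<in> la_carrier T" using h(1)[OF zero_closed] h(2) by simp
  next
    fix x y assume "x \<in> la_carrier T" "y \<in> la_carrier T"
    then obtain x' y' where "x' \<in> C" "y' \<in> C" "x = f x'" "y = f y'" using ex by metis
    then show "la_add T x y \<in> la_carrier T" "la_brk T x y \<in> la_carrier T"
      "la_add T x y = la_add T y x"
      using h(1) by (auto simp flip: h(3) h(5) simp: add_comm)
  next
    fix x a assume "x \<in> la_carrier T"
    then obtain x' where "x' \<in> C" "x = f x'" using ex by metis
    then show "la_smult T a x \<in> la_carrier T" "la_add T (la_zero T) x = x"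
       "la_smult T 1 x = x" "la_smult T 0 x = la_zero T"
      using h(1) by (auto simp flip: h(2) h(3) h(4))
  next
    fix x y z assume "x \<in> la_carrier T" "y \<in> la_carrier T" "z \<in> la_carrier T"
    then obtain x' y' z' where "x' \<in> C" "y' \<in> C" "z' \<in> C" "x = f x'" "y = f y'" "z = f z'"
      using ex by metis
    then show "la_add T (la_add T x y) z = la_add T x (la_add T y z)"
      "la_brk T (la_add T x y) z = la_add T (la_brk T x z) (la_brk T y z)"
      "la_brk T x (la_add T y z) = la_add T (la_brk T x y) (la_brk T x z)"
      using h(1) by (auto simp flip: h(3) h(5) simp: add_assoc brk_add_left brk_add_right)
  next
    fix x y a b assume "x \<in> la_carrier T" "y \<in> la_carrier T"
    then obtain x' y' where "x' \<in> C" "y' \<in> C" "x = f x'" "y = f y'" using ex by metis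
    then show "la_smult T a (la_add T x y) = la_add T (la_smult T a x) (la_smult T a y)"
      "la_smult T (a + b) x = la_add T (la_smult T a x) (la_smult T b x)"
      "la_smult T (a * b) x = la_smult T a (la_smult T b x)"
      "la_brk T (la_smult T a x) y = la_smult T a (la_brk T x y)"
      "la_brk T x (la_smult T a y) = la_smult T a (la_brk T x y)"
      using h(1) by (auto simp flip: h(3) h(4) h(5)
          simp: scale_add add_scale mult_scale brk_scale_left brk_scale_right)
  qed
qed

context bilinear_alg
begin

lemma lsubspace_vimage:
  assumes f: "alg_hom L T f" and W: "lsubspace T W"
  shows "lsubspace L {x \<in> C. f x \<in> W}"
  using W alg_homD[OF f] unfolding lsubspace_def by auto

lemma lideal_kernel:
  assumes f: "alg_hom L T f" and T: "bilinear_alg T"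
  shows "lideal L {x \<in> C. f x = la_zero T}"
proof -
  interpret T: bilinear_alg T by (rule T)
  have "lsubspace T {la_zero T}" by (simp add: lsubspace_def)
  from lsubspace_vimage[OF f this] show ?thesis
    unfolding lideal_def by (auto simp: alg_homD[OF f])
qed

lemma coset_mem: "lsubspace L I \<Longrightarrow> x \<in> C \<Longrightarrow> x \<in> coset L I x"
  unfolding coset_def using lsubspace_zero[of I] by (auto intro!: bexI[of _ vzero])

lemma rep_coset:
  assumes "lsubspace L I" "x \<in> C"
  obtains i where "i \<in> I" "rep (coset L I x) = vadd x i"
proof -
  have "rep (coset L I x) \<in> coset L I x"
    unfolding rep_def by (rule someI[of _ x]) (rule coset_mem[OF assms])
  then show ?thesis using that unfolding coset_def by blast
qed

lemma coset_add_mem: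
  assumes I: "lsubspace L I" and x: "x \<in> C" and i: "i \<in> I"
  shows "coset L I (vadd x i) = coset L I x"
proof -
  have IC: "\<And>k. k \<in> I \<Longrightarrow> k \<in> C" using lsubspace_subset[OF I] by blast
  show ?thesis unfolding coset_def
  proof (intro set_eqI iffI)
    fix y assume "y \<in> {y. \<exists>k\<in>I. y = vadd (vadd x i) k}"
    then obtain k where k: "k \<in> I" "y = vadd (vadd x i) k" by blast
    then have "y = vadd x (vadd i k)" using x IC i by (simp add: add_assoc)
    with lsubspace_add[OF I i k(1)] show "y \<in> {y. \<exists>k\<in>I. y = vadd x k}" by blast
  next
    fix y assume "y \<in> {y. \<exists>k\<in>I. y = vadd x k}"
    then obtain k where k: "k \<in> I" "y = vadd x k" by blast
    have "vadd (vadd x i) (vadd (vscale (-1) i) k) = vadd x (vadd (vadd i (vscale (-1) i)) k)"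
      using k x IC i by (simp add: add_assoc del: add_neg)
    then have "y = vadd (vadd x i) (vadd (vscale (-1) i) k)" using k x IC i by simp
    with lsubspace_add[OF I lsubspace_scale[OF I i] k(1)]
    show "y \<in> {y. \<exists>k\<in>I. y = vadd (vadd x i) k}" by blast
  qed
qed

lemma coset_eq_zero_iff:
  assumes I: "lsubspace L I" and x: "x \<in> C"
  shows "coset L I x = coset L I vzero \<longleftrightarrow> x \<in> I"
proof
  assume "coset L I x = coset L I vzero"
  then have "x \<in> coset L I vzero" using coset_mem[OF I x] by simp
  then obtain k where "k \<in> I" "x = vadd vzero k" unfolding coset_def by blast
  then show "x \<in> I" using lsubspace_subset[OF I] by auto
next
  assume "x \<in> I"
  then have "coset L I (vadd vzero x) = coset L I vzero" by (rule coset_add_mem[OF I zero_closed])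
  then show "coset L I x = coset L I vzero" using x by simp
qed

lemma coset_image: "coset L I ` C = la_carrier (quot L I)"
  by (simp add: quot_def)

lemma coset_add_cong:
  assumes "lsubspace L I" "x \<in> C" "y \<in> C" "i \<in> I" "j \<in> I"
  shows "coset L I (vadd (vadd x i) (vadd y j)) = coset L I (vadd x y)"
proof -
  have "i \<in> C" "j \<in> C" using assms lsubspace_subset by blast+
  then have "vadd (vadd x i) (vadd y j) = vadd (vadd x y) (vadd i j)"
    using assms by (simp add: add_assoc add_left_commute)
  then show ?thesis using assms lsubspace_add by (simp add: coset_add_mem)
qed

lemma coset_scale_cong:
  assumes "lsubspace L I" "x \<in> C" "i \<in> I"
  shows "coset L I (vscale a (vadd x i)) = coset L I (vscale a x)"
proof -
  have "i \<in> C" using assms lsubspace_subset by blast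
  then show ?thesis using assms lsubspace_scale by (simp add: scale_add coset_add_mem)
qed

lemma coset_brk_cong:
  assumes I: "lideal L I" and "x \<in> C" "y \<in> C" "i \<in> I" "j \<in> I"
  shows "coset L I (brk (vadd x i) (vadd y j)) = coset L I (brk x y)"
proof -
  have S: "lsubspace L I" using I by (rule lideal_subspace)
  have iC: "i \<in> C" and jC: "j \<in> C" using assms lsubspace_subset[OF S] by blast+
  have "brk i y \<in> I" "brk x j \<in> I" "brk i j \<in> I"
    using I assms iC unfolding lideal_def by auto
  then have "vadd (brk i y) (vadd (brk x j) (brk i j)) \<in> I" using lsubspace_add[OF S] by blast
  moreover have "brk (vadd x i) (vadd y j) = vadd (brk x y) (vadd (brk i y) (vadd (brk x j) (brk i j)))"
    using assms iC jC by (simp add: brk_add_left brk_add_right add_assoc)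
  ultimately show ?thesis using assms by (simp add: coset_add_mem[OF S])
qed

lemma coset_hom:
  assumes I: "lideal L I"
  shows "alg_hom L (quot L I) (coset L I)"
proof -
  have S: "lsubspace L I" using I by (rule lideal_subspace)
  show ?thesis
    unfolding alg_hom_def
  proof (intro conjI ballI allI)
    fix x y assume x: "x \<in> C" and y: "y \<in> C"
    obtain i where i: "i \<in> I" "rep (coset L I x) = vadd x i" using rep_coset[OF S x] .
    obtain j where j: "j \<in> I" "rep (coset L I y) = vadd y j" using rep_coset[OF S y] .
    show "coset L I (vadd x y) = la_add (quot L I) (coset L I x) (coset L I y)"
      using coset_add_cong[OF S x y i(1) j(1)] i j by (simp add: quot_def)
    show "coset L I (brk x y) = la_brk (quot L I) (coset L I x) (coset L I y)"
      using coset_brk_cong[OF I x y i(1) j(1)] i j by (simp add: quot_def)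
  next
    fix a x assume x: "x \<in> C"
    obtain i where i: "i \<in> I" "rep (coset L I x) = vadd x i" using rep_coset[OF S x] .
    show "coset L I (vscale a x) = la_smult (quot L I) a (coset L I x)"
      using coset_scale_cong[OF S x i(1)] i by (simp add: quot_def)
  qed (auto simp: quot_def)
qed

lemma bilinear_alg_quot: "lideal L I \<Longrightarrow> bilinear_alg (quot L I)"
  using bilinear_alg_image[OF coset_hom coset_image] .

lemma quot_zero_iff: "lideal L I \<Longrightarrow> x \<in> C \<Longrightarrow> coset L I x = la_zero (quot L I) \<longleftrightarrow> x \<in> I"
  using coset_eq_zero_iff[of I x] by (simp add: quot_def lideal_def)

lemma quot_lift_coset:
  assumes I: "lideal L I" and f: "alg_hom L T f" and T: "bilinear_alg T"
    and kernel: "\<And>i. i \<in> I \<Longrightarrow> f i = la_zero T" and x: "x \<in> C"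
  shows "f (rep (coset L I x)) = f x"
proof -
  interpret T: bilinear_alg T by (rule T)
  have S: "lsubspace L I" using I by (rule lideal_subspace)
  obtain i where i: "i \<in> I" "rep (coset L I x) = vadd x i" using rep_coset[OF S x] .
  have "i \<in> C" using lsubspace_subset[OF S] i(1) by blast
  then show ?thesis using i x alg_homD[OF f] by (simp add: kernel)
qed

lemma quot_lift:
  assumes I: "lideal L I" and f: "alg_hom L T f" and T: "bilinear_alg T"
    and kernel: "\<And>i. i \<in> I \<Longrightarrow> f i = la_zero T"
  shows "alg_hom (quot L I) T (\<lambda>X. f (rep X))"
proof -
  have lift: "f (rep (coset L I x)) = f x" if "x \<in> C" for x
    by (rule quot_lift_coset) (use assms that in auto)
  note h = alg_homD[OF f] and q = alg_homD[OF coset_hom[OF I]]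
  have ex: "\<And>u. u \<in> la_carrier (quot L I) \<Longrightarrow> \<exists>x\<in>C. u = coset L I x"
    using coset_image[of I] by (metis imageE)
  show ?thesis
    unfolding alg_hom_def
  proof (intro conjI ballI allI)
    fix u assume "u \<in> la_carrier (quot L I)"
    then obtain x where "x \<in> C" "u = coset L I x" using ex by blast
    then show "f (rep u) \<in> la_carrier T" using lift h(1) by simp
  next
    show "f (rep (la_zero (quot L I))) = la_zero T" using lift[OF zero_closed] h(2) q(2) by simp
  next
    fix u v assume "u \<in> la_carrier (quot L I)" "v \<in> la_carrier (quot L I)"
    then obtain x y where xy: "x \<in> C" "u = coset L I x" "y \<in> C" "v = coset L I y" using ex by metis
    show "f (rep (la_add (quot L I) u v)) = la_add T (f (rep u)) (f (rep v))"
      using xy lift q(3)[of x y, symmetric] h(3) by simp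
    show "f (rep (la_brk (quot L I) u v)) = la_brk T (f (rep u)) (f (rep v))"
      using xy lift q(5)[of x y, symmetric] h(5) by simp
  next
    fix a u assume "u \<in> la_carrier (quot L I)"
    then obtain x where "x \<in> C" "u = coset L I x" using ex by metis
    then show "f (rep (la_smult (quot L I) a u)) = la_smult T a (f (rep u))"
      using lift q(4)[of x a, symmetric] h(4) by simp
  qed
qed

end

section \<open>Lie algebras\<close>

locale lie_algebra = bilinear_alg +
  assumes brk_self[simp]: "x \<in> la_carrier L \<Longrightarrow> la_brk L x x = la_zero L"
    and jacobi: "x \<in> la_carrier L \<Longrightarrow> y \<in> la_carrier L \<Longrightarrow> z \<in> la_carrier L \<Longrightarrow>
      la_add L (la_add L (la_brk L x (la_brk L y z)) (la_brk L y (la_brk L z x))) (la_brk L z (la_brk L x y))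
        = la_zero L"

lemma (in bilinear_alg) lie_algebra_quot:
  assumes I: "lideal L I"
    and brk_self: "\<And>x. x \<in> C \<Longrightarrow> brk x x \<in> I"
    and jacobi: "\<And>x y z. x \<in> C \<Longrightarrow> y \<in> C \<Longrightarrow> z \<in> C \<Longrightarrow>
      vadd (vadd (brk x (brk y z)) (brk y (brk z x))) (brk z (brk x y)) \<in> I"
  shows "lie_algebra (quot L I)"
proof -
  let ?Q = "quot L I"
  interpret Q: bilinear_alg ?Q by (rule bilinear_alg_quot[OF I])
  note q = alg_homD[OF coset_hom[OF I]]
  have ex: "\<And>u. u \<in> la_carrier ?Q \<Longrightarrow> \<exists>x\<in>C. u = coset L I x"
    using coset_image[of I] by (metis imageE)
  show ?thesis
  proof
    fix u assume "u \<in> la_carrier ?Q"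
    then obtain x where "x \<in> C" "u = coset L I x" using ex by blast
    then show "la_brk ?Q u u = la_zero ?Q"
      using q(5)[of x x] quot_zero_iff[OF I, of "brk x x"] brk_self by simp
  next
    fix u v w assume "u \<in> la_carrier ?Q" "v \<in> la_carrier ?Q" "w \<in> la_carrier ?Q"
    then obtain x y z where xyz: "x \<in> C" "u = coset L I x" "y \<in> C" "v = coset L I y"
      "z \<in> C" "w = coset L I z" using ex by metis
    then show "la_add ?Q (la_add ?Q (la_brk ?Q u (la_brk ?Q v w)) (la_brk ?Q v (la_brk ?Q w u)))
        (la_brk ?Q w (la_brk ?Q u v)) = la_zero ?Q"
      using quot_zero_iff[OF I] jacobi[of x y z] by (simp flip: q(3) q(5))
  qed
qed

context lie_algebra
begin

lemma brk_anticomm: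
  assumes x: "x \<in> C" and y: "y \<in> C"
  shows "brk y x = vscale (-1) (brk x y)"
proof (rule add_eq_zero_imp_neg)
  have "vadd (vadd (brk x x) (brk y x)) (vadd (brk x y) (brk y y)) = vzero"
    using brk_self[of "vadd x y"] x y by (simp add: brk_add_left brk_add_right del: brk_self)
  then show "vadd (brk x y) (brk y x) = vzero"
    using x y add_comm[of "brk y x" "brk x y"] by simp
qed (use x y in auto)

lemma lie_algebra_quot_ideal: "lideal L I \<Longrightarrow> lie_algebra (quot L I)"
  using lsubspace_zero[OF lideal_subspace] jacobi by (intro lie_algebra_quot) auto

lemma brk_brk_in_brset:
  assumes A: "lideal L A" and B: "lideal L B" and x: "x \<in> C" and a: "a \<in> A" and b: "b \<in> B"
  shows "brk x (brk a b) \<in> brset L A B"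
proof -
  let ?AB = "brset L A B"
  have aC: "a \<in> C" and bC: "b \<in> C" using A B a b lsubspace_subset lideal_subspace by blast+
  have S: "lsubspace L ?AB" using A B by (intro brset_subspace lsubspace_subset lideal_subspace)
  \<comment> \<open>Jacobi: \<open>[x,[a,b]] = -([a,[b,x]] + [b,[x,a]])\<close>, and \<open>[b,[x,a]] = -[[x,a],b]\<close>.\<close>
  have "vadd (vadd (brk a (brk b x)) (brk b (brk x a))) (brk x (brk a b)) = vzero"
    using jacobi[OF x aC bC] x aC bC by (simp add: add_assoc add_comm add_left_commute)
  then have "brk x (brk a b) = vscale (-1) (vadd (brk a (brk b x)) (brk b (brk x a)))"
    using x aC bC by (intro add_eq_zero_imp_neg) auto
  moreover have "brk a (brk b x) \<in> ?AB"
    using B b x unfolding lideal_def by (intro brk_in_brset[OF a]) auto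
  moreover have "brk x a \<in> A" using A a x unfolding lideal_def by auto
  then have "brk b (brk x a) \<in> ?AB"
    using brk_anticomm[OF brk_closed[OF x aC] bC] brk_in_brset[of "brk x a" A b B] b
      lsubspace_scale[OF S] by simp
  ultimately show ?thesis using lsubspace_add[OF S] lsubspace_scale[OF S] by simp
qed

lemma brset_lideal:
  assumes A: "lideal L A" and B: "lideal L B"
  shows "lideal L (brset L A B)"
proof -
  let ?AB = "brset L A B"
  have S: "lsubspace L ?AB" using A B by (intro brset_subspace lsubspace_subset lideal_subspace)
  have left: "brk x y \<in> ?AB" if x: "x \<in> C" and y: "y \<in> ?AB" for x y
  proof -
    have "lspan L {brk a b |a b. a \<in> A \<and> b \<in> B} \<subseteq> {z \<in> C. brk x z \<in> ?AB}"
    proof (rule lspan_least)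
      show "lsubspace L {z \<in> C. brk x z \<in> ?AB}"
        using S x unfolding lsubspace_def by (auto simp: brk_add_right brk_scale_right)
      show "{brk a b |a b. a \<in> A \<and> b \<in> B} \<subseteq> {z \<in> C. brk x z \<in> ?AB}"
      proof clarify
        fix a b assume ab: "a \<in> A" "b \<in> B"
        then have "a \<in> C" "b \<in> C" using A B lsubspace_subset lideal_subspace by blast+
        then show "brk a b \<in> C \<and> brk x (brk a b) \<in> ?AB" using brk_brk_in_brset[OF A B x ab] by simp
      qed
    qed
    then show ?thesis using y unfolding brset_def by blast
  qed
  have "brk y x \<in> ?AB" if "x \<in> C" "y \<in> ?AB" for x y
    using left[OF that] brk_anticomm[OF that(1)] lsubspace_subset[OF S] that lsubspace_scale[OF S]
    by auto
  with left S show ?thesis unfolding lideal_def by blast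
qed

lemma lcs_lideal: "lideal L (lcs L k)"
proof (induction k)
  case (Suc n)
  then show ?case using lideal_carrier brset_lideal[OF lideal_carrier Suc.IH] by simp
qed (simp add: lideal_carrier)

lemma lcs_subset: "lcs L k \<subseteq> C"
  using lcs_lideal lideal_subspace lsubspace_subset by blast

lemma lcs_two: "lcs L 2 = brset L C C"
  by (simp add: numeral_2_eq_2)

end

section \<open>The free Lie algebra and its quotients\<close>

type_synonym 'k free_lie_elem = "(magma \<Rightarrow> 'k) set"
type_synonym 'k F_elem = "(magma \<Rightarrow> 'k) set set"
type_synonym 'k M_elem = "(magma \<Rightarrow> 'k) set set set"

lemma mag_mult_nonzero: "mag_mult p q t \<noteq> 0 \<Longrightarrow> \<exists>a b. t = Mul a b \<and> p a \<noteq> 0 \<and> q b \<noteq> 0"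
  by (cases t) (auto simp: mag_mult_def)

lemma bilinear_alg_free_mag: "bilinear_alg (free_mag g :: (magma \<Rightarrow> 'k::field, 'k) lie_alg)"
proof
  fix x y :: "magma \<Rightarrow> 'k" assume x: "x \<in> la_carrier (free_mag g)" and y: "y \<in> la_carrier (free_mag g)"
  have fx: "finite {t. x t \<noteq> 0}" and fy: "finite {t. y t \<noteq> 0}" using x y by (auto simp: free_mag_def)
  have "{t. x t + y t \<noteq> 0} \<subseteq> {t. x t \<noteq> 0} \<union> {t. y t \<noteq> 0}" by auto
  then have "finite {t. x t + y t \<noteq> 0}" using fx fy finite_subset by blast
  moreover have "mgens t \<subseteq> {..<g}" if "x t + y t \<noteq> 0" for t
    using that x y by (cases "x t = 0") (auto simp: free_mag_def)
  ultimately show "la_add (free_mag g) x y \<in> la_carrier (free_mag g)" by (simp add: free_mag_def)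
  have "{t. mag_mult x y t \<noteq> 0} \<subseteq> (\<lambda>(a, b). Mul a b) ` ({t. x t \<noteq> 0} \<times> {t. y t \<noteq> 0})"
    using mag_mult_nonzero by fastforce
  then have "finite {t. mag_mult x y t \<noteq> 0}" using fx fy finite_subset by blast
  moreover have "mgens t \<subseteq> {..<g}" if nz: "mag_mult x y t \<noteq> 0" for t
  proof -
    obtain a b where "t = Mul a b" "x a \<noteq> 0" "y b \<noteq> 0" using mag_mult_nonzero[OF nz] by blast
    then show ?thesis using x y by (auto simp: free_mag_def)
  qed
  ultimately show "la_brk (free_mag g) x y \<in> la_carrier (free_mag g)" by (simp add: free_mag_def)
next
  fix x :: "magma \<Rightarrow> 'k" and a :: 'k assume x: "x \<in> la_carrier (free_mag g)"
  have "{t. a * x t \<noteq> 0} \<subseteq> {t. x t \<noteq> 0}" by auto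
  then show "la_smult (free_mag g) a x \<in> la_carrier (free_mag g)"
    using x by (auto simp: free_mag_def intro: finite_subset)
qed (auto simp: free_mag_def mag_mult_def fun_eq_iff algebra_simps split: magma.split)

definition monom :: "magma \<Rightarrow> magma \<Rightarrow> 'k::field" where
  "monom t = (\<lambda>s. if s = t then 1 else 0)"

lemma monom_mem: "mgens t \<subseteq> {..<g} \<Longrightarrow> (monom t :: magma \<Rightarrow> 'k::field) \<in> la_carrier (free_mag g)"
  by (simp add: free_mag_def monom_def)

lemma monom_Mul: "monom (Mul a b) = mag_mult (monom a) (monom b)"
  by (auto simp: monom_def mag_mult_def fun_eq_iff split: magma.split)

lemma free_mag_subspace_mem:
  fixes p :: "magma \<Rightarrow> 'k::field"
  assumes W: "lsubspace (free_mag g) W" and p: "p \<in> la_carrier (free_mag g)"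
    and monoms: "\<And>t. p t \<noteq> 0 \<Longrightarrow> monom t \<in> W"
  shows "p \<in> W"
proof -
  interpret bilinear_alg "free_mag g :: (magma \<Rightarrow> 'k, 'k) lie_alg" by (rule bilinear_alg_free_mag)
  have "finite {t. p t \<noteq> 0}" using p by (simp add: free_mag_def)
  then show ?thesis using p monoms
  proof (induction "{t. p t \<noteq> 0}" arbitrary: p rule: finite_induct)
    case empty
    then have "p = vzero" by (auto simp: free_mag_def fun_eq_iff)
    then show ?case using lsubspace_zero[OF W] by simp
  next
    case (insert s S)
    let ?p' = "p(s := 0)"
    have p': "?p' \<in> W"
    proof (rule insert.hyps(3))
      show "S = {t. ?p' t \<noteq> 0}" using insert.hyps(2,4) by auto
      show "?p' \<in> C" using insert.prems(1) insert.hyps(1,4)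
        by (auto simp: free_mag_def elim: finite_subset[rotated])
      show "monom t \<in> W" if "?p' t \<noteq> 0" for t
        using that insert.prems(2) by (cases "t = s") auto
    qed
    have s: "vscale (p s) (monom s) \<in> W"
      using insert.hyps(4) insert.prems(2) by (intro lsubspace_scale[OF W]) auto
    have "vadd (vscale (p s) (monom s)) ?p' = p"
      by (simp add: free_mag_def monom_def fun_eq_iff)
    then show ?case using lsubspace_add[OF W s p'] by simp
  qed
qed

definition lie_rel_ideal :: "nat \<Rightarrow> (magma \<Rightarrow> 'k::field) set" where
  "lie_rel_ideal g = ideal_gen (free_mag g) (lie_relations g)"

lemma lie_relations_subset: "lie_relations g \<subseteq> la_carrier (free_mag g :: (magma \<Rightarrow> 'k::field, 'k) lie_alg)"
proof -
  interpret bilinear_alg "free_mag g :: (magma \<Rightarrow> 'k::field, 'k) lie_alg" by (rule bilinear_alg_free_mag)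
  show ?thesis unfolding lie_relations_def Let_def by auto
qed

lemma lideal_lie_rel_ideal: "lideal (free_mag g) (lie_rel_ideal g :: (magma \<Rightarrow> 'k::field) set)"
  unfolding lie_rel_ideal_def
  by (rule bilinear_alg.ideal_gen_lideal[OF bilinear_alg_free_mag lie_relations_subset])

lemma free_lie_quot: "free_lie g = quot (free_mag g) (lie_rel_ideal g)"
  by (simp add: free_lie_def lie_rel_ideal_def)

lemma lie_algebra_free_lie: "lie_algebra (free_lie g :: ('k::field free_lie_elem, 'k) lie_alg)"
proof -
  interpret bilinear_alg "free_mag g :: (magma \<Rightarrow> 'k, 'k) lie_alg" by (rule bilinear_alg_free_mag)
  have rel: "r \<in> lie_rel_ideal g" if "r \<in> lie_relations g" for r :: "magma \<Rightarrow> 'k"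
    using that ideal_gen_superset unfolding lie_rel_ideal_def by blast
  show ?thesis
    unfolding free_lie_quot
  proof (rule lie_algebra_quot[OF lideal_lie_rel_ideal])
    fix x assume "x \<in> C"
    then show "brk x x \<in> lie_rel_ideal g"
      by (intro rel) (unfold lie_relations_def Let_def, blast)
  next
    fix x y z assume "x \<in> C" "y \<in> C" "z \<in> C"
    then show "vadd (vadd (brk x (brk y z)) (brk y (brk z x))) (brk z (brk x y)) \<in> lie_rel_ideal g"
      by (intro rel) (unfold lie_relations_def Let_def, blast)
  qed
qed

definition nilp_ideal :: "nat \<Rightarrow> nat \<Rightarrow> 'k::field F_elem" where
  "nilp_ideal g c = lcs (free_lie g) (c + 1)"

definition metab_ideal :: "nat \<Rightarrow> nat \<Rightarrow> 'k::field M_elem" where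
  "metab_ideal g c = brset (F_gc g c) (lcs (F_gc g c) 2) (lcs (F_gc g c) 2)"

lemma F_gc_quot: "F_gc g c = quot (free_lie g) (nilp_ideal g c)"
  by (simp add: F_gc_def nilp_ideal_def)

lemma M_gc_quot: "M_gc g c = quot (F_gc g c) (metab_ideal g c)"
  by (simp add: M_gc_def metab_ideal_def Let_def)

lemma bilinear_alg_free_lie: "bilinear_alg (free_lie g :: ('k::field free_lie_elem, 'k) lie_alg)"
  using lie_algebra_free_lie lie_algebra.axioms(1) by blast

lemma lideal_nilp_ideal: "lideal (free_lie g) (nilp_ideal g c :: 'k::field F_elem)"
  unfolding nilp_ideal_def by (rule lie_algebra.lcs_lideal[OF lie_algebra_free_lie])

lemma lie_algebra_F_gc: "lie_algebra (F_gc g c :: ('k::field F_elem, 'k) lie_alg)"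
  unfolding F_gc_quot
  by (rule lie_algebra.lie_algebra_quot_ideal[OF lie_algebra_free_lie lideal_nilp_ideal])

lemma bilinear_alg_F_gc: "bilinear_alg (F_gc g c :: ('k::field F_elem, 'k) lie_alg)"
  using lie_algebra_F_gc lie_algebra.axioms(1) by blast

lemma lideal_metab_ideal: "lideal (F_gc g c) (metab_ideal g c :: 'k::field M_elem)"
proof -
  interpret lie_algebra "F_gc g c :: ('k F_elem, 'k) lie_alg" by (rule lie_algebra_F_gc)
  show ?thesis unfolding metab_ideal_def by (intro brset_lideal lcs_lideal)
qed

lemma lie_algebra_M_gc: "lie_algebra (M_gc g c :: ('k::field M_elem, 'k) lie_alg)"
  unfolding M_gc_quot
  by (rule lie_algebra.lie_algebra_quot_ideal[OF lie_algebra_F_gc lideal_metab_ideal])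

lemma bilinear_alg_M_gc: "bilinear_alg (M_gc g c :: ('k::field M_elem, 'k) lie_alg)"
  using lie_algebra_M_gc lie_algebra.axioms(1) by blast

definition proj_F :: "nat \<Rightarrow> nat \<Rightarrow> (magma \<Rightarrow> 'k::field) \<Rightarrow> 'k F_elem" where
  "proj_F g c p = coset (free_lie g) (nilp_ideal g c) (coset (free_mag g) (lie_rel_ideal g) p)"

definition proj_M :: "nat \<Rightarrow> nat \<Rightarrow> (magma \<Rightarrow> 'k::field) \<Rightarrow> 'k M_elem" where
  "proj_M g c p = coset (F_gc g c) (metab_ideal g c) (proj_F g c p)"

lemma proj_F_hom: "alg_hom (free_mag g) (F_gc g c) (proj_F g c :: _ \<Rightarrow> 'k::field F_elem)"
proof -
  have "proj_F g c = coset (free_lie g) (nilp_ideal g c) \<circ> coset (free_mag g) (lie_rel_ideal g)"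
    by (simp add: proj_F_def fun_eq_iff)
  then show ?thesis
    using alg_hom_comp[OF
        bilinear_alg.coset_hom[OF bilinear_alg_free_mag lideal_lie_rel_ideal, folded free_lie_quot]
        bilinear_alg.coset_hom[OF bilinear_alg_free_lie lideal_nilp_ideal, folded F_gc_quot]]
    by metis
qed

lemma proj_M_hom: "alg_hom (free_mag g) (M_gc g c) (proj_M g c :: _ \<Rightarrow> 'k::field M_elem)"
proof -
  have "proj_M g c = coset (F_gc g c) (metab_ideal g c) \<circ> proj_F g c"
    by (simp add: proj_M_def fun_eq_iff)
  then show ?thesis
    using alg_hom_comp[OF proj_F_hom
        bilinear_alg.coset_hom[OF bilinear_alg_F_gc lideal_metab_ideal, folded M_gc_quot]]
    by metis
qed

lemma proj_M_onto:
  "proj_M g c ` la_carrier (free_mag g) = la_carrier (M_gc g c :: ('k::field M_elem, 'k) lie_alg)"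
proof -
  have "proj_M g c ` la_carrier (free_mag g) =
      coset (F_gc g c) (metab_ideal g c) ` coset (free_lie g) (nilp_ideal g c) `
        coset (free_mag g) (lie_rel_ideal g) ` la_carrier (free_mag g)"
    by (simp add: proj_M_def proj_F_def image_image)
  also have "\<dots> = la_carrier (M_gc g c :: ('k M_elem, 'k) lie_alg)"
    by (simp add: bilinear_alg.coset_image[OF bilinear_alg_free_mag] free_lie_quot[symmetric]
        bilinear_alg.coset_image[OF bilinear_alg_free_lie] F_gc_quot[symmetric]
        bilinear_alg.coset_image[OF bilinear_alg_F_gc] M_gc_quot[symmetric])
  finally show ?thesis .
qed

section \<open>The tensor algebra truncated in degree three\<close>

(* A function t :: nat list => 'k stands for the tensor sum_w t(w) x_(w_1) ... x_(w_n).
   tensor_brk is the commutator xy - yx of the tensor algebra without constant term,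
   truncated to degrees 2 and 3. *)
definition tensor_brk :: "(nat list \<Rightarrow> 'k::field) \<Rightarrow> (nat list \<Rightarrow> 'k) \<Rightarrow> nat list \<Rightarrow> 'k" where
  "tensor_brk x y w = (case w of
       [i, j] \<Rightarrow> x [i] * y [j] - y [i] * x [j]
     | [k, i, j] \<Rightarrow> x [k] * y [i, j] + x [k, i] * y [j] - y [k] * x [i, j] - y [k, i] * x [j]
     | _ \<Rightarrow> 0)"

lemma list_cases_upto_3:
  obtains "w = []" | i where "w = [i]" | i j where "w = [i, j]" | k i j where "w = [k, i, j]"
    | a b c d r where "w = a # b # c # d # r"
  by (metis list.exhaust)

lemma tensor_brk_simps[simp]:
  "tensor_brk x y [] = 0" "tensor_brk x y [i] = 0"
  "tensor_brk x y [i, j] = x [i] * y [j] - y [i] * x [j]"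
  "tensor_brk x y [k, i, j] = x [k] * y [i, j] + x [k, i] * y [j] - y [k] * x [i, j] - y [k, i] * x [j]"
  "tensor_brk x y (a # b # c # d # r) = 0"
  by (simp_all add: tensor_brk_def)

definition trunc_tensor :: "(nat list \<Rightarrow> 'k::field, 'k) lie_alg" where
  "trunc_tensor = \<lparr>la_carrier = UNIV, la_add = (\<lambda>x y w. x w + y w), la_zero = (\<lambda>w. 0),
     la_smult = (\<lambda>a x w. a * x w), la_brk = tensor_brk\<rparr>"

lemma trunc_tensor_simps[simp]:
  "la_carrier trunc_tensor = UNIV" "la_add trunc_tensor x y = (\<lambda>w. x w + y w)"
  "la_zero trunc_tensor = (\<lambda>w. 0)" "la_smult trunc_tensor a x = (\<lambda>w. a * x w)"
  "la_brk trunc_tensor = tensor_brk"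
  by (simp_all add: trunc_tensor_def)

lemma lie_algebra_trunc_tensor: "lie_algebra (trunc_tensor :: (nat list \<Rightarrow> 'k::field, 'k) lie_alg)"
  by unfold_locales (auto simp: fun_eq_iff tensor_brk_def algebra_simps split: list.split)

lemma bilinear_alg_trunc_tensor: "bilinear_alg (trunc_tensor :: (nat list \<Rightarrow> 'k::field, 'k) lie_alg)"
  using lie_algebra_trunc_tensor lie_algebra.axioms(1) by blast

lemma tensor_brk_add_left: "tensor_brk (\<lambda>w. x w + y w) z = (\<lambda>w. tensor_brk x z w + tensor_brk y z w)"
  and tensor_brk_add_right: "tensor_brk z (\<lambda>w. x w + y w) = (\<lambda>w. tensor_brk z x w + tensor_brk z y w)"
  and tensor_brk_zero_left: "tensor_brk (\<lambda>w. 0) z = (\<lambda>w. 0)"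
  and tensor_brk_zero_right: "tensor_brk z (\<lambda>w. 0) = (\<lambda>w. 0)"
  and tensor_brk_scale: "tensor_brk (\<lambda>w. a * x w) (\<lambda>w. b * y w) = (\<lambda>w. a * b * tensor_brk x y w)"
  by (auto simp: fun_eq_iff tensor_brk_def algebra_simps split: list.split)

lemma tensor_brk_sum_left:
  "finite A \<Longrightarrow> tensor_brk (\<lambda>w. \<Sum>a\<in>A. f a w) y = (\<lambda>w. \<Sum>a\<in>A. tensor_brk (f a) y w)"
  by (induction A rule: finite_induct) (simp_all add: tensor_brk_zero_left tensor_brk_add_left)

lemma tensor_brk_sum_right:
  "finite A \<Longrightarrow> tensor_brk y (\<lambda>w. \<Sum>a\<in>A. f a w) = (\<lambda>w. \<Sum>a\<in>A. tensor_brk y (f a) w)"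
  by (induction A rule: finite_induct) (simp_all add: tensor_brk_zero_right tensor_brk_add_right)

definition tensor_degs_from :: "nat \<Rightarrow> (nat list \<Rightarrow> 'k::field) set" where
  "tensor_degs_from k = {t. \<forall>w. t w \<noteq> 0 \<longrightarrow> k \<le> length w \<and> length w \<le> 3}"

lemma lsubspace_tensor_degs_from: "lsubspace trunc_tensor (tensor_degs_from k)"
  unfolding lsubspace_def tensor_degs_from_def by (auto; metis add_0 add.right_neutral)

lemma tensor_brk_degs_from_two: "tensor_brk x y \<in> tensor_degs_from 2"
  unfolding tensor_degs_from_def
proof (intro CollectI allI impI)
  fix w assume "tensor_brk x y w \<noteq> 0"
  then show "2 \<le> length w \<and> length w \<le> 3" by (cases w rule: list_cases_upto_3) auto
qed

lemma tensor_brk_degs_from_Suc: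
  assumes k: "2 \<le> k" and y: "y \<in> tensor_degs_from k"
  shows "tensor_brk x y \<in> tensor_degs_from (Suc k)"
  unfolding tensor_degs_from_def
proof (intro CollectI allI impI)
  have y0: "y w = 0" if "length w < k" for w using y that unfolding tensor_degs_from_def by force
  fix w assume nz: "tensor_brk x y w \<noteq> 0"
  then have "length w \<le> 3" using tensor_brk_degs_from_two unfolding tensor_degs_from_def by blast
  moreover have "Suc k \<le> length w"
    using nz k y0[of "[_]"] y0[of "[_, _]"] by (cases w rule: list_cases_upto_3) force+
  ultimately show "Suc k \<le> length w \<and> length w \<le> 3" by simp
qed

lemma tensor_brk_degs_from_two_zero:
  assumes "x \<in> tensor_degs_from 2" "y \<in> tensor_degs_from 2"
  shows "tensor_brk x y = (\<lambda>w. 0)"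
proof
  have "x [i] = 0" "y [i] = 0" for i using assms unfolding tensor_degs_from_def by force+
  then show "tensor_brk x y w = 0" for w by (cases w rule: list_cases_upto_3) auto
qed

lemma tensor_degs_from_four: "4 \<le> k \<Longrightarrow> t \<in> tensor_degs_from k \<Longrightarrow> t = (\<lambda>w. 0)"
  by (auto simp: fun_eq_iff tensor_degs_from_def)

fun mono_tensor :: "magma \<Rightarrow> nat list \<Rightarrow> 'k::field" where
  "mono_tensor (Gen k) = (\<lambda>w. if w = [k] then 1 else 0)"
| "mono_tensor (Mul a b) = tensor_brk (mono_tensor a) (mono_tensor b)"

definition poly_tensor :: "(magma \<Rightarrow> 'k) \<Rightarrow> nat list \<Rightarrow> 'k::field" where
  "poly_tensor p = (\<lambda>w. \<Sum>t | p t \<noteq> 0. p t * mono_tensor t w)"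

lemma poly_tensor_eq_sum:
  "finite F \<Longrightarrow> {t. p t \<noteq> 0} \<subseteq> F \<Longrightarrow> poly_tensor p w = (\<Sum>t\<in>F. p t * mono_tensor t w)"
  unfolding poly_tensor_def by (rule sum.mono_neutral_left) auto

lemma poly_tensor_add:
  assumes "finite {t. p t \<noteq> 0}" "finite {t. q t \<noteq> 0}"
  shows "poly_tensor (\<lambda>t. p t + q t) w = poly_tensor p w + poly_tensor q w"
proof -
  let ?F = "{t. p t \<noteq> 0} \<union> {t. q t \<noteq> 0}"
  have "poly_tensor (\<lambda>t. p t + q t) w = (\<Sum>t\<in>?F. (p t + q t) * mono_tensor t w)"
    using assms by (intro poly_tensor_eq_sum) auto
  also have "\<dots> = (\<Sum>t\<in>?F. p t * mono_tensor t w) + (\<Sum>t\<in>?F. q t * mono_tensor t w)"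
    by (simp add: algebra_simps sum.distrib)
  also have "\<dots> = poly_tensor p w + poly_tensor q w"
    using poly_tensor_eq_sum[of ?F p w] poly_tensor_eq_sum[of ?F q w] assms by auto
  finally show ?thesis .
qed

lemma poly_tensor_scale:
  assumes "finite {t. p t \<noteq> 0}"
  shows "poly_tensor (\<lambda>t. a * p t) w = a * poly_tensor p w"
proof -
  have "poly_tensor (\<lambda>t. a * p t) w = (\<Sum>t | p t \<noteq> 0. a * p t * mono_tensor t w)"
    by (rule poly_tensor_eq_sum[OF assms]) auto
  then show ?thesis by (simp add: poly_tensor_def sum_distrib_left mult.assoc)
qed

lemma poly_tensor_mag_mult:
  assumes fp: "finite {t. p t \<noteq> 0}" and fq: "finite {t. q t \<noteq> 0}"
  shows "poly_tensor (mag_mult p q) w = tensor_brk (poly_tensor p) (poly_tensor q) w"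
proof -
  let ?P = "{t. p t \<noteq> 0}" and ?Q = "{t. q t \<noteq> 0}"
  let ?G = "(\<lambda>(a, b). Mul a b) ` (?P \<times> ?Q)"
  have "poly_tensor (mag_mult p q) w = (\<Sum>t\<in>?G. mag_mult p q t * mono_tensor t w)"
    using fp fq mag_mult_nonzero by (intro poly_tensor_eq_sum) fastforce+
  also have "\<dots> = (\<Sum>(a, b)\<in>?P \<times> ?Q. p a * q b * tensor_brk (mono_tensor a) (mono_tensor b) w)"
    by (subst sum.reindex) (auto simp: inj_on_def mag_mult_def intro!: sum.cong)
  also have "\<dots> = (\<Sum>a\<in>?P. \<Sum>b\<in>?Q. p a * q b * tensor_brk (mono_tensor a) (mono_tensor b) w)"
    by (rule sum.cartesian_product[symmetric])
  also have "\<dots> = tensor_brk (poly_tensor p) (poly_tensor q) w"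
    unfolding poly_tensor_def using fp fq
    by (simp add: tensor_brk_sum_left tensor_brk_sum_right tensor_brk_scale)
  finally show ?thesis .
qed

lemma poly_tensor_hom: "alg_hom (free_mag g) trunc_tensor (poly_tensor :: (magma \<Rightarrow> 'k::field) \<Rightarrow> _)"
  unfolding alg_hom_def
proof (intro conjI ballI allI)
  fix p q :: "magma \<Rightarrow> 'k" assume "p \<in> la_carrier (free_mag g)" "q \<in> la_carrier (free_mag g)"
  then have "finite {t. p t \<noteq> 0}" "finite {t. q t \<noteq> 0}" by (auto simp: free_mag_def)
  then show "poly_tensor (la_add (free_mag g) p q) = la_add trunc_tensor (poly_tensor p) (poly_tensor q)"
    "poly_tensor (la_brk (free_mag g) p q) = la_brk trunc_tensor (poly_tensor p) (poly_tensor q)"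
    by (simp_all add: free_mag_def fun_eq_iff poly_tensor_add poly_tensor_mag_mult)
next
  fix a :: 'k and p :: "magma \<Rightarrow> 'k" assume "p \<in> la_carrier (free_mag g)"
  then show "poly_tensor (la_smult (free_mag g) a p) = la_smult trunc_tensor a (poly_tensor p)"
    by (simp add: free_mag_def fun_eq_iff poly_tensor_scale)
qed (simp_all add: free_mag_def poly_tensor_def)

lemma poly_tensor_monom: "poly_tensor (monom t) = (mono_tensor t :: nat list \<Rightarrow> 'k::field)"
proof
  have "{s. (monom t :: magma \<Rightarrow> 'k) s \<noteq> 0} = {t}" by (auto simp: monom_def)
  then show "poly_tensor (monom t) w = (mono_tensor t w :: 'k)" for w
    by (simp add: poly_tensor_def monom_def)
qed

lemma poly_tensor_linear_coeff:
  assumes "p \<in> la_carrier (free_mag g)"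
  shows "poly_tensor p [k] = (p (Gen k) :: 'k::field)"
proof -
  have "mono_tensor t [k] = (if t = Gen k then 1 else (0::'k))" for t by (cases t) auto
  then have "poly_tensor p [k] = (\<Sum>t | p t \<noteq> 0. if t = Gen k then p t else 0)"
    unfolding poly_tensor_def by (intro sum.cong) auto
  also have "\<dots> = p (Gen k)" using assms by (simp add: free_mag_def sum.delta')
  finally show ?thesis .
qed

lemma (in lie_algebra) lcs_image_tensor_degs_from:
  assumes f: "alg_hom L trunc_tensor f" and k: "2 \<le> k"
  shows "x \<in> lcs L k \<Longrightarrow> f x \<in> tensor_degs_from k"
  using k
proof (induction k arbitrary: x)
  case (Suc n)
  have n: "0 < n" using Suc.prems(2) by simp
  have "lspan L {brk a b |a b. a \<in> C \<and> b \<in> lcs L n} \<subseteq> {x \<in> C. f x \<in> tensor_degs_from (Suc n)}"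
  proof (rule lspan_least)
    show "lsubspace L {x \<in> C. f x \<in> tensor_degs_from (Suc n)}"
      by (rule lsubspace_vimage[OF f lsubspace_tensor_degs_from])
    show "{brk a b |a b. a \<in> C \<and> b \<in> lcs L n} \<subseteq> {x \<in> C. f x \<in> tensor_degs_from (Suc n)}"
    proof clarify
      fix a b assume a: "a \<in> C" and b: "b \<in> lcs L n"
      have bC: "b \<in> C" using b lcs_subset by blast
      have "tensor_brk (f a) (f b) \<in> tensor_degs_from (Suc n)"
      proof (cases "n = 1")
        case True then show ?thesis using tensor_brk_degs_from_two by (simp add: numeral_2_eq_2)
      next
        case False
        then show ?thesis using Suc.IH[OF b] n by (intro tensor_brk_degs_from_Suc) auto
      qed
      then show "brk a b \<in> C \<and> f (brk a b) \<in> tensor_degs_from (Suc n)"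
        using alg_homD(5)[OF f a bC] a bC by simp
    qed
  qed
  then show ?case using Suc.prems(1) n by (auto simp: brset_def)
qed simp

(* rep (rep (rep x)) is an arbitrary preimage of x in the free magma algebra; for c >= 3 the
   value does not depend on that choice (M_tensor_proj_M). *)
definition M_tensor :: "'k M_elem \<Rightarrow> nat list \<Rightarrow> 'k::field" where
  "M_tensor x = poly_tensor (rep (rep (rep x)))"

lemma free_lie_tensor:
  shows "alg_hom (free_lie g) trunc_tensor (\<lambda>X. poly_tensor (rep X) :: nat list \<Rightarrow> 'k::field)"
    and "p \<in> la_carrier (free_mag g) \<Longrightarrow>
      poly_tensor (rep (coset (free_mag g) (lie_rel_ideal g) p)) = (poly_tensor p :: nat list \<Rightarrow> 'k)"
proof -
  interpret bilinear_alg "free_mag g :: (magma \<Rightarrow> 'k, 'k) lie_alg" by (rule bilinear_alg_free_mag)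
  interpret T: lie_algebra "trunc_tensor :: (nat list \<Rightarrow> 'k, 'k) lie_alg" by (rule lie_algebra_trunc_tensor)
  note h = alg_homD[OF poly_tensor_hom[of g]]
  have "lie_relations g \<subseteq> {x \<in> C. poly_tensor x = (\<lambda>w. 0 :: 'k)}"
  proof
    fix r :: "magma \<Rightarrow> 'k" assume r: "r \<in> lie_relations g"
    then consider p where "p \<in> C" "r = brk p p"
      | p q s where "p \<in> C" "q \<in> C" "s \<in> C" "r = vadd (vadd (brk p (brk q s)) (brk q (brk s p))) (brk s (brk p q))"
      unfolding lie_relations_def Let_def by blast
    then have "poly_tensor r = (\<lambda>w. 0 :: 'k)"
      by cases (use T.brk_self T.jacobi in \<open>simp_all add: h\<close>)
    then show "r \<in> {x \<in> C. poly_tensor x = (\<lambda>w. 0)}" using r lie_relations_subset by blast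
  qed
  then have "lie_rel_ideal g \<subseteq> {x \<in> C. poly_tensor x = (\<lambda>w. 0 :: 'k)}"
    unfolding lie_rel_ideal_def
    by (intro ideal_gen_least) (use lideal_kernel[OF poly_tensor_hom bilinear_alg_trunc_tensor] in simp_all)
  then have kernel: "\<And>i. i \<in> lie_rel_ideal g \<Longrightarrow> poly_tensor i = la_zero (trunc_tensor :: (nat list \<Rightarrow> 'k, 'k) lie_alg)"
    by auto
  note lift = quot_lift[OF lideal_lie_rel_ideal poly_tensor_hom bilinear_alg_trunc_tensor kernel]
    quot_lift_coset[OF lideal_lie_rel_ideal poly_tensor_hom bilinear_alg_trunc_tensor kernel]
  show "alg_hom (free_lie g) trunc_tensor (\<lambda>X. poly_tensor (rep X) :: nat list \<Rightarrow> 'k)"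
    unfolding free_lie_quot by (rule lift(1))
  show "p \<in> C \<Longrightarrow> poly_tensor (rep (coset (free_mag g) (lie_rel_ideal g) p)) = (poly_tensor p :: nat list \<Rightarrow> 'k)"
    by (rule lift(2))
qed

context
  fixes g c :: nat
  assumes c: "3 \<le> c"
begin

lemma F_gc_tensor:
  shows "alg_hom (F_gc g c) trunc_tensor (\<lambda>X. poly_tensor (rep (rep X)) :: nat list \<Rightarrow> 'k::field)"
    and "X \<in> la_carrier (free_lie g) \<Longrightarrow>
      poly_tensor (rep (rep (coset (free_lie g) (nilp_ideal g c) X))) = (poly_tensor (rep X) :: nat list \<Rightarrow> 'k)"
proof -
  have kernel: "poly_tensor (rep i) = la_zero (trunc_tensor :: (nat list \<Rightarrow> 'k, 'k) lie_alg)"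
    if "i \<in> nilp_ideal g c" for i
  proof -
    have "poly_tensor (rep i) \<in> (tensor_degs_from (c + 1) :: (nat list \<Rightarrow> 'k) set)"
      using that c unfolding nilp_ideal_def
      by (intro lie_algebra.lcs_image_tensor_degs_from[OF lie_algebra_free_lie free_lie_tensor(1)]) auto
    then show ?thesis using tensor_degs_from_four[of "c + 1"] c by simp
  qed
  note lift = bilinear_alg.quot_lift[OF bilinear_alg_free_lie lideal_nilp_ideal free_lie_tensor(1)
      bilinear_alg_trunc_tensor kernel]
    bilinear_alg.quot_lift_coset[OF bilinear_alg_free_lie lideal_nilp_ideal free_lie_tensor(1)
      bilinear_alg_trunc_tensor kernel]
  show "alg_hom (F_gc g c) trunc_tensor (\<lambda>X. poly_tensor (rep (rep X)) :: nat list \<Rightarrow> 'k)"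
    unfolding F_gc_quot by (rule lift(1))
  show "X \<in> la_carrier (free_lie g) \<Longrightarrow>
      poly_tensor (rep (rep (coset (free_lie g) (nilp_ideal g c) X))) = (poly_tensor (rep X) :: nat list \<Rightarrow> 'k)"
    by (rule lift(2))
qed

lemma M_tensor_hom: "alg_hom (M_gc g c) trunc_tensor (M_tensor :: 'k::field M_elem \<Rightarrow> _)"
  and M_tensor_coset: "X \<in> la_carrier (F_gc g c) \<Longrightarrow>
      M_tensor (coset (F_gc g c) (metab_ideal g c) X) = (poly_tensor (rep (rep X)) :: nat list \<Rightarrow> 'k)"
proof -
  let ?F = "F_gc g c :: ('k F_elem, 'k) lie_alg"
  interpret F: lie_algebra ?F by (rule lie_algebra_F_gc)
  note h = alg_homD[OF F_gc_tensor(1)]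
  have deg2: "poly_tensor (rep (rep x)) \<in> (tensor_degs_from 2 :: (nat list \<Rightarrow> 'k) set)"
    if "x \<in> lcs ?F 2" for x
    using F.lcs_image_tensor_degs_from[OF F_gc_tensor(1) _ that] by simp
  have "lspan ?F {F.brk a b |a b. a \<in> lcs ?F 2 \<and> b \<in> lcs ?F 2}
      \<subseteq> {x \<in> F.C. poly_tensor (rep (rep x)) = la_zero (trunc_tensor :: (nat list \<Rightarrow> 'k, 'k) lie_alg)}"
  proof (rule F.lspan_least)
    show "lsubspace ?F {x \<in> F.C. poly_tensor (rep (rep x)) = la_zero trunc_tensor}"
      using F.lideal_kernel[OF F_gc_tensor(1) bilinear_alg_trunc_tensor] by (rule F.lideal_subspace)
    show "{F.brk a b |a b. a \<in> lcs ?F 2 \<and> b \<in> lcs ?F 2}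
        \<subseteq> {x \<in> F.C. poly_tensor (rep (rep x)) = la_zero trunc_tensor}"
    proof clarify
      fix a b assume a: "a \<in> lcs ?F 2" and b: "b \<in> lcs ?F 2"
      have aC: "a \<in> F.C" and bC: "b \<in> F.C" using a b F.lcs_subset by blast+
      then show "F.brk a b \<in> F.C \<and> poly_tensor (rep (rep (F.brk a b))) = la_zero trunc_tensor"
        using h(5)[OF aC bC] tensor_brk_degs_from_two_zero[OF deg2[OF a] deg2[OF b]] by simp
    qed
  qed
  then have kernel: "\<And>i. i \<in> (metab_ideal g c :: 'k M_elem) \<Longrightarrow>
      poly_tensor (rep (rep i)) = la_zero (trunc_tensor :: (nat list \<Rightarrow> 'k, 'k) lie_alg)"
    unfolding metab_ideal_def brset_def by blast
  note lift = F.quot_lift[OF lideal_metab_ideal F_gc_tensor(1) bilinear_alg_trunc_tensor kernel]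
    F.quot_lift_coset[OF lideal_metab_ideal F_gc_tensor(1) bilinear_alg_trunc_tensor kernel]
  show "alg_hom (M_gc g c) trunc_tensor (M_tensor :: 'k M_elem \<Rightarrow> _)"
    unfolding M_gc_quot M_tensor_def by (rule lift(1))
  show "X \<in> F.C \<Longrightarrow> M_tensor (coset ?F (metab_ideal g c) X) = poly_tensor (rep (rep X))"
    unfolding M_tensor_def by (rule lift(2))
qed

lemma M_tensor_proj_M:
  assumes p: "p \<in> la_carrier (free_mag g)"
  shows "M_tensor (proj_M g c p) = (poly_tensor p :: nat list \<Rightarrow> 'k::field)"
proof -
  have p1: "coset (free_mag g) (lie_rel_ideal g) p \<in> la_carrier (free_lie g :: ('k free_lie_elem, 'k) lie_alg)"
    using bilinear_alg.coset_image[OF bilinear_alg_free_mag, of g "lie_rel_ideal g"] p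
    by (auto simp: free_lie_quot)
  have p2: "proj_F g c p \<in> la_carrier (F_gc g c :: ('k F_elem, 'k) lie_alg)"
    by (rule alg_homD(1)[OF proj_F_hom p])
  show ?thesis
    using M_tensor_coset[OF p2] F_gc_tensor(2)[OF p1] free_lie_tensor(2)[OF p]
    by (simp add: proj_M_def proj_F_def)
qed

end

section \<open>Linear independence of lists\<close>

definition linear_form :: "('a, 'k) lie_alg \<Rightarrow> ('a \<Rightarrow> 'k::field) \<Rightarrow> bool" where
  "linear_form L \<phi> \<longleftrightarrow> (\<forall>x\<in>la_carrier L. \<forall>y\<in>la_carrier L. \<phi> (la_add L x y) = \<phi> x + \<phi> y) \<and>
     (\<forall>a. \<forall>x\<in>la_carrier L. \<phi> (la_smult L a x) = a * \<phi> x)"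

lemma lin_indep_closed: "lin_indep L xs \<Longrightarrow> set xs \<subseteq> la_carrier L"
  by (simp add: lin_indep_def)

context bilinear_alg
begin

lemma lincomb_Nil[simp]: "lincomb L c [] = vzero"
  by (simp add: lincomb_def)

lemma lincomb_Cons[simp]: "lincomb L c (x # xs) = vadd (vscale (c x) x) (lincomb L c xs)"
  by (simp add: lincomb_def)

lemma lincomb_closed[simp]: "set xs \<subseteq> C \<Longrightarrow> lincomb L c xs \<in> C"
  by (induction xs) auto

lemma lincomb_append:
  "set xs \<subseteq> C \<Longrightarrow> set ys \<subseteq> C \<Longrightarrow> lincomb L c (xs @ ys) = vadd (lincomb L c xs) (lincomb L c ys)"
  by (induction xs) (auto simp: add_assoc)

lemma lincomb_zero_coeffs: "set xs \<subseteq> C \<Longrightarrow> (\<And>x. x \<in> set xs \<Longrightarrow> c x = 0) \<Longrightarrow> lincomb L c xs = vzero"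
  by (induction xs) auto

lemma lincomb_cong: "(\<And>x. x \<in> set xs \<Longrightarrow> c x = d x) \<Longrightarrow> lincomb L c xs = lincomb L d xs"
  by (induction xs) auto

lemma lincomb_remove1:
  assumes "distinct xs" "x \<in> set xs" "set xs \<subseteq> C"
  shows "lincomb L c xs = vadd (vscale (c x) x) (lincomb L c (remove1 x xs))"
  using assms
proof (induction xs)
  case (Cons y xs)
  show ?case
  proof (cases "y = x")
    case False
    have rC: "set (remove1 x xs) \<subseteq> C" using Cons.prems set_remove1_subset[of x xs] by auto
    have "lincomb L c (y # xs) = vadd (vscale (c y) y) (vadd (vscale (c x) x) (lincomb L c (remove1 x xs)))"
      using Cons False by simp
    also have "\<dots> = vadd (vscale (c x) x) (vadd (vscale (c y) y) (lincomb L c (remove1 x xs)))"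
      using Cons.prems rC by (intro add_left_commute) auto
    finally show ?thesis using False by simp
  qed simp
qed simp

lemma lincomb_supported:
  assumes "distinct xs" "distinct ys" "set ys \<subseteq> set xs" "set xs \<subseteq> C"
    and "\<And>x. x \<in> set xs \<Longrightarrow> x \<notin> set ys \<Longrightarrow> c x = 0"
  shows "lincomb L c xs = lincomb L c ys"
  using assms
proof (induction xs arbitrary: ys)
  case (Cons x xs)
  show ?case
  proof (cases "x \<in> set ys")
    case True
    have "lincomb L c xs = lincomb L c (remove1 x ys)"
      using Cons.prems by (intro Cons.IH) (auto dest: subsetD[OF set_remove1_subset])
    moreover have "set ys \<subseteq> C" using Cons.prems(3,4) by auto
    ultimately show ?thesis using lincomb_remove1[OF Cons.prems(2) True] by simp
  next
    case False
    then show ?thesis using Cons.prems Cons.IH[of ys] by auto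
  qed
qed simp

lemma lin_indep_coeffs_zero: "lin_indep L xs \<Longrightarrow> lincomb L c xs = vzero \<Longrightarrow> x \<in> set xs \<Longrightarrow> c x = 0"
  unfolding lin_indep_def by blast

lemma lin_indep_Cons_remove1:
  assumes "lin_indep L xs" "x \<in> set xs"
  shows "lin_indep L (x # remove1 x xs)"
  using assms lincomb_remove1[of xs x] unfolding lin_indep_def by auto

lemma linear_form_zero: "linear_form L \<phi> \<Longrightarrow> \<phi> vzero = 0"
  unfolding linear_form_def using zero_closed by (metis mult_zero_left zero_scale)

lemma linear_form_lincomb:
  "linear_form L \<phi> \<Longrightarrow> set xs \<subseteq> C \<Longrightarrow> \<phi> (lincomb L c xs) = (\<Sum>x\<leftarrow>xs. c x * \<phi> x)"
  by (induction xs) (auto simp: linear_form_zero, simp add: linear_form_def)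

lemma lsubspace_common_kernel:
  assumes "lsubspace L W" "\<And>k. k \<in> K \<Longrightarrow> linear_form L (\<phi> k)"
  shows "lsubspace L {x \<in> W. \<forall>k\<in>K. \<phi> k x = 0}"
  using assms lsubspace_subset[OF assms(1)] unfolding lsubspace_def linear_form_def
  by (auto simp: linear_form_zero[OF assms(2)] subset_iff)

lemma linear_form_tensor_coeff:
  assumes "alg_hom L trunc_tensor f"
  shows "linear_form L (\<lambda>x. f x w)"
  using alg_homD[OF assms] by (simp add: linear_form_def)

lemma linear_form_tensor_coeff_brk:
  assumes "alg_hom L trunc_tensor f" "x \<in> C"
  shows "linear_form L (\<lambda>v. f (brk x v) w)"
  using alg_homD[OF assms(1)] assms(2) by (simp add: linear_form_def brk_add_right brk_scale_right)

lemma lincomb_shear: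
  assumes x0: "x0 \<in> C" and zs: "set zs \<subseteq> C"
  shows "lincomb L c (map (\<lambda>z. vadd z (vscale (\<mu> z) x0)) zs) =
    vadd (vscale (\<Sum>z\<leftarrow>zs. c (vadd z (vscale (\<mu> z) x0)) * \<mu> z) x0)
      (lincomb L (\<lambda>z. c (vadd z (vscale (\<mu> z) x0))) zs)"
proof -
  define f where "f = (\<lambda>z. vadd z (vscale (\<mu> z) x0))"
  have "lincomb L c (map f zs) = vadd (vscale (\<Sum>z\<leftarrow>zs. c (f z) * \<mu> z) x0) (lincomb L (\<lambda>z. c (f z)) zs)"
    using zs
  proof (induction zs)
    case (Cons z zs)
    let ?R = "lincomb L (\<lambda>z. c (f z)) zs"
    let ?s = "\<Sum>z\<leftarrow>zs. c (f z) * \<mu> z"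
    have z: "z \<in> C" and R: "?R \<in> C" using Cons.prems by auto
    have "lincomb L c (map f (z # zs)) = vadd (vscale (c (f z)) (f z)) (vadd (vscale ?s x0) ?R)"
      using Cons by simp
    also have "vscale (c (f z)) (f z) = vadd (vscale (c (f z)) z) (vscale (c (f z) * \<mu> z) x0)"
      using z x0 by (simp add: f_def scale_add mult_scale)
    also have "vadd (vadd (vscale (c (f z)) z) (vscale (c (f z) * \<mu> z) x0)) (vadd (vscale ?s x0) ?R)
       = vadd (vadd (vscale (c (f z) * \<mu> z) x0) (vscale ?s x0)) (vadd (vscale (c (f z)) z) ?R)"
      using z x0 R by (simp add: add_assoc add_left_commute)
    also have "vadd (vscale (c (f z) * \<mu> z) x0) (vscale ?s x0) = vscale (c (f z) * \<mu> z + ?s) x0"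
      using x0 by (simp add: add_scale)
    finally show ?case by simp
  qed (use x0 in simp)
  then show ?thesis unfolding f_def .
qed

lemma shear_inj_on:
  assumes ind: "lin_indep L (x0 # zs)"
  shows "inj_on (\<lambda>z. vadd z (vscale (\<mu> z) x0)) (set zs)"
proof (rule inj_onI, rule ccontr)
  fix z1 z2 assume z1: "z1 \<in> set zs" and z2: "z2 \<in> set zs" and ne: "z1 \<noteq> z2"
    and eq: "vadd z1 (vscale (\<mu> z1) x0) = vadd z2 (vscale (\<mu> z2) x0)"
  have x0: "x0 \<in> C" "x0 \<notin> set zs" and zs: "set zs \<subseteq> C" "distinct zs"
    using ind by (auto simp: lin_indep_def)
  have z1C: "z1 \<in> C" and z2C: "z2 \<in> C" using z1 z2 zs by auto
  define d where "d x = (if x = z1 then 1 else if x = z2 then -1 else if x = x0 then \<mu> z1 - \<mu> z2 else 0)"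
    for x
  have d: "d x0 = \<mu> z1 - \<mu> z2" "d z1 = 1" "d z2 = -1" using ne x0 z1 z2 by (auto simp: d_def)
  have "lincomb L d zs = lincomb L d [z1, z2]"
    using z1 z2 ne zs by (intro lincomb_supported) (auto simp: d_def x0)
  then have "lincomb L d (x0 # zs) = vadd (vscale (\<mu> z1 - \<mu> z2) x0) (vadd z1 (vscale (-1) z2))"
    using d z1C z2C by simp
  also have "\<dots> = vadd (vadd (vscale (\<mu> z1) x0) (vscale (- \<mu> z2) x0)) (vadd z1 (vscale (-1) z2))"
    using x0 add_scale[of x0 "\<mu> z1" "- \<mu> z2"] by simp
  also have "\<dots> = vadd (vadd z1 (vscale (\<mu> z1) x0)) (vadd (vscale (-1) z2) (vscale (- \<mu> z2) x0))"
    using x0 z1C z2C by (simp add: add_assoc add_comm add_left_commute)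
  also have "\<dots> = vadd (vadd z1 (vscale (\<mu> z1) x0)) (vscale (-1) (vadd z2 (vscale (\<mu> z2) x0)))"
    using x0 z2C mult_scale[of x0 "-1" "\<mu> z2"] by (simp add: scale_add)
  also have "\<dots> = vzero" using eq z2C x0 by simp
  finally have "d z1 = 0" using lin_indep_coeffs_zero[OF ind] z1 by simp
  then show False using d by simp
qed

lemma lin_indep_shear:
  assumes ind: "lin_indep L (x0 # zs)"
  shows "lin_indep L (map (\<lambda>z. vadd z (vscale (\<mu> z) x0)) zs)"
proof -
  define f where "f = (\<lambda>z. vadd z (vscale (\<mu> z) x0))"
  have x0: "x0 \<in> C" "x0 \<notin> set zs" and zs: "set zs \<subseteq> C" "distinct zs"
    using ind by (auto simp: lin_indep_def)
  have "c (f z) = 0" if lc: "lincomb L c (map f zs) = vzero" and z: "z \<in> set zs" for c z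
  proof -
    define s where "s = (\<Sum>z\<leftarrow>zs. c (f z) * \<mu> z)"
    define d where "d x = (if x = x0 then s else c (f x))" for x
    have "lincomb L d zs = lincomb L (\<lambda>z. c (f z)) zs"
      using x0(2) by (intro lincomb_cong) (auto simp: d_def)
    then have "lincomb L d (x0 # zs) = vadd (vscale s x0) (lincomb L (\<lambda>z. c (f z)) zs)"
      by (simp add: d_def)
    also have "\<dots> = lincomb L c (map f zs)"
      unfolding f_def s_def by (rule lincomb_shear[OF x0(1) zs(1), symmetric])
    also have "\<dots> = vzero" by (rule lc)
    finally have "d z = 0" using lin_indep_coeffs_zero[OF ind] z by simp
    moreover have "z \<noteq> x0" using x0(2) z by blast
    ultimately show ?thesis by (simp add: d_def)
  qed
  moreover have "distinct (map f zs)"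
    using zs(2) shear_inj_on[OF ind] by (simp add: distinct_map f_def)
  ultimately show ?thesis
    using x0(1) zs(1) by (auto simp: lin_indep_def f_def)
qed

lemma lin_indep_kernel:
  assumes ind: "lin_indep L xs" and W: "lsubspace L W" "set xs \<subseteq> W" and \<phi>: "linear_form L \<phi>"
  obtains ys where "lin_indep L ys" "set ys \<subseteq> W" "\<And>y. y \<in> set ys \<Longrightarrow> \<phi> y = 0"
    "length xs \<le> Suc (length ys)"
proof (cases "\<forall>x\<in>set xs. \<phi> x = 0")
  case True
  then show ?thesis using that[of xs] ind W by auto
next
  case False
  then obtain x0 where x0: "x0 \<in> set xs" "\<phi> x0 \<noteq> 0" by blast
  define zs where "zs = remove1 x0 xs"
  define f where "f z = vadd z (vscale (- (\<phi> z / \<phi> x0)) x0)" for z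
  have "lin_indep L (map f zs)"
    unfolding f_def zs_def by (rule lin_indep_shear[OF lin_indep_Cons_remove1[OF ind x0(1)]])
  moreover have zsW: "set zs \<subseteq> W" using W(2) unfolding zs_def by (meson order_trans set_remove1_subset)
  then have "set (map f zs) \<subseteq> W"
    using x0(1) W by (auto simp: f_def intro!: lsubspace_add lsubspace_scale)
  moreover have "\<phi> (f z) = 0" if "z \<in> set zs" for z
  proof -
    have "z \<in> C" "x0 \<in> C" using that zsW x0(1) W(2) lsubspace_subset[OF W(1)] by auto
    then have "\<phi> (f z) = \<phi> z + - (\<phi> z / \<phi> x0) * \<phi> x0"
      using \<phi> by (simp add: f_def linear_form_def)
    then show ?thesis using x0(2) by simp
  qed
  moreover have "length xs \<le> Suc (length (map f zs))"
    using x0(1) by (simp add: zs_def length_remove1)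
  ultimately show ?thesis using that[of "map f zs"] by auto
qed

lemma lin_indep_common_kernel:
  assumes ind: "lin_indep L xs" and W: "lsubspace L W" "set xs \<subseteq> W"
    and \<phi>: "\<And>k. k < m \<Longrightarrow> linear_form L (\<phi> k)"
  shows "\<exists>ys. lin_indep L ys \<and> set ys \<subseteq> W \<and> (\<forall>k<m. \<forall>y\<in>set ys. \<phi> k y = 0)
    \<and> length xs \<le> length ys + m"
  using \<phi>
proof (induction m)
  case 0
  then show ?case using ind W by auto
next
  case (Suc m)
  have "\<exists>ys. lin_indep L ys \<and> set ys \<subseteq> W \<and> (\<forall>k<m. \<forall>y\<in>set ys. \<phi> k y = 0)
      \<and> length xs \<le> length ys + m"
    by (rule Suc.IH) (simp add: Suc.prems)
  then obtain ys where ys: "lin_indep L ys" "set ys \<subseteq> W" "\<forall>k<m. \<forall>y\<in>set ys. \<phi> k y = 0"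
    "length xs \<le> length ys + m" by blast
  let ?W = "{x \<in> W. \<forall>k\<in>{..<m}. \<phi> k x = 0}"
  have "lsubspace L ?W" using W(1) Suc.prems by (intro lsubspace_common_kernel) auto
  moreover have "set ys \<subseteq> ?W" using ys(2,3) by auto
  ultimately obtain zs where zs: "lin_indep L zs" "set zs \<subseteq> ?W" "\<And>y. y \<in> set zs \<Longrightarrow> \<phi> m y = 0"
    "length ys \<le> Suc (length zs)"
    using lin_indep_kernel[OF ys(1)] Suc.prems by blast
  have "\<forall>k<Suc m. \<forall>z\<in>set zs. \<phi> k z = 0"
    using zs(2,3) less_Suc_eq by auto
  then show ?case using zs ys(4) by auto
qed

lemma lin_indep_append_dual:
  assumes ys: "lin_indep L ys" and e: "\<And>k. k < n \<Longrightarrow> e k \<in> C"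
    and forms: "\<And>k. k < n \<Longrightarrow> linear_form L (\<phi> k)"
    and vanish: "\<And>k y. k < n \<Longrightarrow> y \<in> set ys \<Longrightarrow> \<phi> k y = 0"
    and dual: "\<And>k k'. k < n \<Longrightarrow> k' < n \<Longrightarrow> \<phi> k (e k') \<noteq> 0 \<longleftrightarrow> k = k'"
  shows "lin_indep L (ys @ map e [0..<n])"
proof -
  let ?es = "map e [0..<n]"
  have ysC: "set ys \<subseteq> C" and esC: "set ?es \<subseteq> C" using ys e by (auto simp: lin_indep_def)
  have "inj_on e {0..<n}" using dual by (intro inj_onI) (metis atLeastLessThan_iff)
  moreover have "set ys \<inter> set ?es = {}" using vanish dual by fastforce
  ultimately have "distinct (ys @ ?es)" using ys by (simp add: lin_indep_def distinct_map)
  moreover have "c x = 0" if lc: "lincomb L c (ys @ ?es) = vzero" and x: "x \<in> set (ys @ ?es)" for c x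
  proof -
    have ce: "c (e k) = 0" if k: "k < n" for k
    proof -
      have "0 = \<phi> k (lincomb L c (ys @ ?es))" using lc linear_form_zero[OF forms[OF k]] by simp
      also have "\<dots> = (\<Sum>y\<leftarrow>ys. c y * \<phi> k y) + (\<Sum>k'\<leftarrow>[0..<n]. c (e k') * \<phi> k (e k'))"
        using linear_form_lincomb[OF forms[OF k]] ysC esC by (simp add: comp_def)
      also have "(\<Sum>y\<leftarrow>ys. c y * \<phi> k y) = (\<Sum>y\<leftarrow>ys. 0)"
        using vanish[OF k] by (intro arg_cong[where f = sum_list] map_cong) auto
      also have "(\<Sum>k'\<leftarrow>[0..<n]. c (e k') * \<phi> k (e k')) = (\<Sum>k'\<in>{0..<n}. c (e k') * \<phi> k (e k'))"
        by (simp add: interv_sum_list_conv_sum_set_nat)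
      also have "\<dots> = (\<Sum>k'\<in>{0..<n}. if k' = k then c (e k) * \<phi> k (e k) else 0)"
        by (rule sum.cong) (use dual[OF k] in auto)
      also have "\<dots> = c (e k) * \<phi> k (e k)" using k by simp
      finally show ?thesis using dual[OF k k] by simp
    qed
    then have "lincomb L c ?es = vzero" using esC by (intro lincomb_zero_coeffs) auto
    then have "lincomb L c ys = vzero" using lc lincomb_append[OF ysC esC] ysC by simp
    then show ?thesis using x ce lin_indep_coeffs_zero[OF ys] by auto
  qed
  ultimately show ?thesis using ysC esC by (auto simp: lin_indep_def)
qed

end

section \<open>Linear parts and abelian subalgebras of M_gc\<close>

definition M_monom :: "nat \<Rightarrow> nat \<Rightarrow> magma \<Rightarrow> 'k::field M_elem" where
  "M_monom g c t = proj_M g c (monom t)"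

definition M_zero_linear :: "nat \<Rightarrow> nat \<Rightarrow> 'k::field M_elem set" where
  "M_zero_linear g c = {x \<in> la_carrier (M_gc g c). \<forall>k. M_tensor x [k] = (0::'k)}"

lemma M_monom_mem:
  "mgens t \<subseteq> {..<g} \<Longrightarrow> M_monom g c t \<in> la_carrier (M_gc g c :: ('k::field M_elem, 'k) lie_alg)"
  unfolding M_monom_def by (intro alg_homD(1)[OF proj_M_hom] monom_mem)

lemma proj_F_lcs_two:
  assumes p: "p \<in> la_carrier (free_mag g)" and no_linear: "\<And>k. p (Gen k) = (0::'k::field)"
  shows "proj_F g c p \<in> lcs (F_gc g c :: ('k F_elem, 'k) lie_alg) 2"
proof -
  let ?F = "F_gc g c :: ('k F_elem, 'k) lie_alg"
  interpret F: lie_algebra ?F by (rule lie_algebra_F_gc)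
  note h = alg_homD[OF proj_F_hom[of g c]]
  have "lsubspace (free_mag g) {x \<in> la_carrier (free_mag g). proj_F g c x \<in> lcs ?F 2}"
    by (rule bilinear_alg.lsubspace_vimage[OF bilinear_alg_free_mag proj_F_hom])
      (simp add: F.lcs_two F.brset_subspace)
  then have "p \<in> {x \<in> la_carrier (free_mag g). proj_F g c x \<in> lcs ?F 2}"
  proof (rule free_mag_subspace_mem[OF _ p])
    fix t assume t: "p t \<noteq> 0"
    then have mg: "mgens t \<subseteq> {..<g}" using p by (simp add: free_mag_def)
    obtain a b where ab: "t = Mul a b" using t no_linear by (cases t) auto
    have a: "(monom a :: magma \<Rightarrow> 'k) \<in> la_carrier (free_mag g)"
      and b: "(monom b :: magma \<Rightarrow> 'k) \<in> la_carrier (free_mag g)"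
      using mg ab by (auto intro!: monom_mem)
    have "proj_F g c (monom t) = F.brk (proj_F g c (monom a)) (proj_F g c (monom b))"
      using h(5)[OF a b] ab by (simp add: monom_Mul free_mag_def)
    also have "\<dots> \<in> lcs ?F 2" unfolding F.lcs_two by (intro F.brk_in_brset h(1) a b)
    finally show "monom t \<in> {x \<in> la_carrier (free_mag g). proj_F g c x \<in> lcs ?F 2}"
      using monom_mem[OF mg] by simp
  qed
  then show ?thesis by simp
qed

context
  fixes g c :: nat
  assumes c: "3 \<le> c"
begin

lemma M_tensor_linear_coeff_big:
  assumes "x \<in> la_carrier (M_gc g c :: ('k::field M_elem, 'k) lie_alg)" "g \<le> k"
  shows "M_tensor x [k] = (0::'k)"
proof -
  obtain p where p: "p \<in> la_carrier (free_mag g)" "x = proj_M g c p"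
    using assms(1) proj_M_onto by blast
  have "p (Gen k) = 0" using p(1) assms(2) by (auto simp: free_mag_def)
  then show ?thesis using M_tensor_proj_M[OF c p(1)] poly_tensor_linear_coeff[OF p(1)] p(2) by simp
qed

lemma lsubspace_M_zero_linear: "lsubspace (M_gc g c) (M_zero_linear g c :: 'k::field M_elem set)"
proof -
  interpret M: bilinear_alg "M_gc g c :: ('k M_elem, 'k) lie_alg" by (rule bilinear_alg_M_gc)
  show ?thesis
    unfolding M_zero_linear_def
    using M.lsubspace_common_kernel[OF M.lsubspace_carrier, of UNIV "\<lambda>k x. M_tensor x [k]"]
      M.linear_form_tensor_coeff[OF M_tensor_hom[OF c]]
    by simp
qed

lemma abelian_M_zero_linear: "abelian_subalg (M_gc g c) (M_zero_linear g c :: 'k::field M_elem set)"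
proof -
  let ?F = "F_gc g c :: ('k F_elem, 'k) lie_alg" and ?M = "M_gc g c :: ('k M_elem, 'k) lie_alg"
  interpret F: lie_algebra ?F by (rule lie_algebra_F_gc)
  have lcs2: "\<exists>a\<in>lcs ?F 2. x = coset ?F (metab_ideal g c) a" if x: "x \<in> M_zero_linear g c" for x
  proof -
    obtain p where p: "p \<in> la_carrier (free_mag g)" "x = proj_M g c p"
      using x proj_M_onto unfolding M_zero_linear_def by blast
    have "p (Gen k) = 0" for k
      using x p M_tensor_proj_M[OF c p(1)] poly_tensor_linear_coeff[OF p(1)]
      unfolding M_zero_linear_def by simp
    then have "proj_F g c p \<in> lcs ?F 2" by (rule proj_F_lcs_two[OF p(1)])
    then show ?thesis using p(2) unfolding proj_M_def by blast
  qed
  have "la_brk ?M x y = la_zero ?M" if x: "x \<in> M_zero_linear g c" and y: "y \<in> M_zero_linear g c" for x y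
  proof -
    obtain a b where a: "a \<in> lcs ?F 2" "x = coset ?F (metab_ideal g c) a"
      and b: "b \<in> lcs ?F 2" "y = coset ?F (metab_ideal g c) b"
      using lcs2[OF x] lcs2[OF y] by blast
    have aC: "a \<in> F.C" and bC: "b \<in> F.C" using a(1) b(1) F.lcs_subset by blast+
    have "la_brk ?M x y = coset ?F (metab_ideal g c) (F.brk a b)"
      using alg_homD(5)[OF F.coset_hom[OF lideal_metab_ideal, folded M_gc_quot] aC bC] a b by simp
    also have "\<dots> = la_zero ?M"
      using F.quot_zero_iff[OF lideal_metab_ideal, of "F.brk a b"] F.brk_in_brset[OF a(1) b(1)] aC bC
      by (simp add: M_gc_quot metab_ideal_def)
    finally show ?thesis .
  qed
  then show ?thesis using lsubspace_M_zero_linear unfolding abelian_subalg_def by blast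
qed

lemma M_tensor_M_monom:
  "mgens t \<subseteq> {..<g} \<Longrightarrow> M_tensor (M_monom g c t :: 'k M_elem) = (mono_tensor t :: nat list \<Rightarrow> 'k::field)"
  unfolding M_monom_def by (simp add: M_tensor_proj_M[OF c monom_mem] poly_tensor_monom)

lemma lin_indep_append_gens:
  assumes ys: "lin_indep (M_gc g c) ys" and zero_linear: "set ys \<subseteq> (M_zero_linear g c :: 'k::field M_elem set)"
  shows "lin_indep (M_gc g c) (ys @ map (\<lambda>k. M_monom g c (Gen k)) [0..<g])"
proof -
  interpret M: bilinear_alg "M_gc g c :: ('k M_elem, 'k) lie_alg" by (rule bilinear_alg_M_gc)
  show ?thesis
  proof (rule M.lin_indep_append_dual[OF ys, where \<phi> = "\<lambda>k x. M_tensor x [k]"])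
    show "linear_form (M_gc g c) (\<lambda>x. M_tensor x [k] :: 'k)" for k
      by (rule M.linear_form_tensor_coeff[OF M_tensor_hom[OF c]])
    show "M_tensor y [k] = 0" if "y \<in> set ys" for k y
      using that zero_linear by (auto simp: M_zero_linear_def)
    show "(M_tensor (M_monom g c (Gen k')) [k] \<noteq> (0::'k)) \<longleftrightarrow> k = k'" if "k' < g" for k k'
      using that by (simp add: M_tensor_M_monom)
    show "M_monom g c (Gen k) \<in> la_carrier (M_gc g c :: ('k M_elem, 'k) lie_alg)" if "k < g" for k
      using that by (intro M_monom_mem) simp
  qed
qed

lemma lin_indep_compress:
  assumes xs: "lin_indep (M_gc g c :: ('k::field M_elem, 'k) lie_alg) xs"
  shows "\<exists>ys. lin_indep (M_gc g c) ys \<and> set ys \<subseteq> (M_zero_linear g c :: 'k M_elem set)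
    \<and> length xs \<le> length ys + g"
proof -
  interpret M: bilinear_alg "M_gc g c :: ('k M_elem, 'k) lie_alg" by (rule bilinear_alg_M_gc)
  obtain ys where ys: "lin_indep (M_gc g c) ys" "\<forall>k<g. \<forall>y\<in>set ys. M_tensor y [k] = (0::'k)"
    "length xs \<le> length ys + g"
    using M.lin_indep_common_kernel[OF xs M.lsubspace_carrier lin_indep_closed[OF xs],
        of g "\<lambda>k x. M_tensor x [k]"] M.linear_form_tensor_coeff[OF M_tensor_hom[OF c]]
    by blast
  have "set ys \<subseteq> (M_zero_linear g c :: 'k M_elem set)"
  proof
    fix y assume y: "y \<in> set ys"
    then have yC: "y \<in> M.C" using lin_indep_closed[OF ys(1)] by blast
    have "M_tensor y [k] = (0::'k)" for k
      using ys(2) y M_tensor_linear_coeff_big[OF yC, of k] by (cases "k < g") auto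
    then show "y \<in> M_zero_linear g c" using yC by (simp add: M_zero_linear_def)
  qed
  then show ?thesis using ys by blast
qed

lemma linear_coeffs_of_commuting:
  assumes x: "x \<in> la_carrier (M_gc g c)" and y: "y \<in> la_carrier (M_gc g c)"
    and commute: "la_brk (M_gc g c) x y = la_zero (M_gc g c :: ('k::field M_elem, 'k) lie_alg)"
    and xi: "M_tensor x [i] \<noteq> (0::'k)" and yi: "M_tensor y [i] = (0::'k)"
  shows "M_tensor y [k] = (0::'k)"
proof -
  note h = alg_homD[OF M_tensor_hom[OF c]]
  have "tensor_brk (M_tensor x) (M_tensor y) = M_tensor (la_brk (M_gc g c) x y)"
    using h(5)[OF x y] by simp
  also have "\<dots> = (\<lambda>w. 0)" using commute h(2) by simp
  finally have "tensor_brk (M_tensor x) (M_tensor y) [i, k] = 0" by simp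
  then show ?thesis using xi yi by simp
qed

lemma abelian_indep_zero_linear_hyperplane:
  assumes S: "abelian_subalg (M_gc g c) S"
    and xs: "lin_indep (M_gc g c :: ('k::field M_elem, 'k) lie_alg) xs" "set xs \<subseteq> S"
    and x: "x \<in> S" "M_tensor x [i] \<noteq> (0::'k)"
  obtains ys where "lin_indep (M_gc g c) ys" "set ys \<subseteq> S" "set ys \<subseteq> M_zero_linear g c"
    "length xs \<le> Suc (length ys)"
proof -
  let ?M = "M_gc g c :: ('k M_elem, 'k) lie_alg"
  interpret M: bilinear_alg ?M by (rule bilinear_alg_M_gc)
  have SW: "lsubspace ?M S" and commute: "\<And>u v. u \<in> S \<Longrightarrow> v \<in> S \<Longrightarrow> M.brk u v = M.vzero"
    using S unfolding abelian_subalg_def by auto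
  have SC: "S \<subseteq> M.C" by (rule M.lsubspace_subset[OF SW])
  obtain ys where ys: "lin_indep ?M ys" "set ys \<subseteq> S" "\<And>y. y \<in> set ys \<Longrightarrow> M_tensor y [i] = 0"
    "length xs \<le> Suc (length ys)"
    using M.lin_indep_kernel[OF xs(1) SW xs(2) M.linear_form_tensor_coeff[OF M_tensor_hom[OF c], of "[i]"]]
    by blast
  have "set ys \<subseteq> M_zero_linear g c"
  proof
    fix l assume l: "l \<in> set ys"
    then have lS: "l \<in> S" using ys(2) by blast
    have "M_tensor l [k] = 0" for k
      using linear_coeffs_of_commuting[OF _ _ commute[OF x(1) lS] x(2) ys(3)[OF l]] x(1) lS SC
      by blast
    then show "l \<in> M_zero_linear g c" using lS SC by (auto simp: M_zero_linear_def)
  qed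
  then show ?thesis using that ys by blast
qed

lemma lin_indep_snoc_commutator:
  assumes ys: "lin_indep (M_gc g c :: ('k::field M_elem, 'k) lie_alg) ys"
    and x: "x \<in> la_carrier (M_gc g c)" "M_tensor x [i] \<noteq> (0::'k)"
    and commute: "\<And>l. l \<in> set ys \<Longrightarrow> la_brk (M_gc g c) x l = la_zero (M_gc g c)"
    and ij: "i < g" "j < g" "j \<noteq> i"
  shows "lin_indep (M_gc g c) (ys @ [M_monom g c (Mul (Gen i) (Gen j))])"
proof -
  let ?M = "M_gc g c :: ('k M_elem, 'k) lie_alg"
  interpret M: bilinear_alg ?M by (rule bilinear_alg_M_gc)
  note h = alg_homD[OF M_tensor_hom[where 'k = 'k, OF c]]
  have mg: "mgens (Mul (Gen i) (Gen j)) \<subseteq> {..<g}" using ij by simp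
  define y :: "'k M_elem" where "y = M_monom g c (Mul (Gen i) (Gen j))"
  define \<phi> where "\<phi> v = M_tensor (M.brk x v) [i, i, j]" for v
  \<comment> \<open>The coefficient of \<open>x\<^sub>i x\<^sub>i x\<^sub>j\<close> in \<open>[x, [x\<^sub>i, x\<^sub>j]]\<close> is that of \<open>x\<^sub>i\<close> in \<open>x\<close>.\<close>
  have yC: "y \<in> M.C" unfolding y_def by (rule M_monom_mem[OF mg])
  have "\<phi> y = tensor_brk (M_tensor x) (M_tensor y) [i, i, j]"
    using h(5)[OF x(1) yC] by (simp add: \<phi>_def)
  also have "\<dots> = M_tensor x [i]"
    using ij(3) by (simp add: y_def M_tensor_M_monom[OF mg])
  finally have "\<phi> y \<noteq> 0" using x(2) by simp
  moreover have "\<phi> l = 0" if "l \<in> set ys" for l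
    using commute[OF that] h(2) by (simp add: \<phi>_def)
  moreover have "linear_form ?M \<phi>"
    unfolding \<phi>_def using x(1) by (rule M.linear_form_tensor_coeff_brk[OF M_tensor_hom[OF c]])
  ultimately have "lin_indep ?M (ys @ map (\<lambda>_. y) [0..<1])"
    using yC by (intro M.lin_indep_append_dual[OF ys, where \<phi> = "\<lambda>_. \<phi>"]) auto
  then show ?thesis by (simp add: y_def)
qed

end

context
  fixes g c :: nat
  assumes c: "3 \<le> c" and g: "2 \<le> g"
begin

lemma abelian_indep_noncentral:
  assumes S: "abelian_subalg (M_gc g c) S"
    and xs: "lin_indep (M_gc g c :: ('k::field M_elem, 'k) lie_alg) xs" "set xs \<subseteq> S"
    and x: "x \<in> S" "M_tensor x [i] \<noteq> (0::'k)"
  obtains zs where "lin_indep (M_gc g c) zs" "set zs \<subseteq> (M_zero_linear g c :: 'k M_elem set)"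
    "length xs \<le> length zs"
proof -
  have SC: "S \<subseteq> la_carrier (M_gc g c)"
    using S unfolding abelian_subalg_def lsubspace_def by blast
  have xC: "x \<in> la_carrier (M_gc g c)" using SC x(1) by blast
  obtain ys where ys: "lin_indep (M_gc g c) ys" "set ys \<subseteq> S" "set ys \<subseteq> M_zero_linear g c"
    "length xs \<le> Suc (length ys)"
    using abelian_indep_zero_linear_hyperplane[OF c S xs x] by blast
  have commute: "la_brk (M_gc g c) x l = la_zero (M_gc g c)" if "l \<in> set ys" for l
    using S x(1) ys(2) that unfolding abelian_subalg_def by blast
  have "i < g" using M_tensor_linear_coeff_big[OF c xC, of i] x(2) by (cases "i < g") auto
  define j where "j = (if i = 0 then 1 else 0 :: nat)"
  have ij: "j < g" "j \<noteq> i" using g by (auto simp: j_def)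
  have "lin_indep (M_gc g c) (ys @ [M_monom g c (Mul (Gen i) (Gen j))])"
    by (rule lin_indep_snoc_commutator[OF c ys(1) xC x(2) commute \<open>i < g\<close> ij])
  moreover have "M_monom g c (Mul (Gen i) (Gen j)) \<in> (M_zero_linear g c :: 'k M_elem set)"
    using M_monom_mem[of "Mul (Gen i) (Gen j)" g c] \<open>i < g\<close> ij
    by (simp add: M_zero_linear_def M_tensor_M_monom[OF c])
  ultimately show ?thesis using that ys(3,4) by simp
qed

lemma abelian_indep_extend:
  assumes S: "abelian_subalg (M_gc g c) S" and xs: "lin_indep (M_gc g c :: ('k::field M_elem, 'k) lie_alg) xs"
    "set xs \<subseteq> S"
  shows "\<exists>zs. lin_indep (M_gc g c :: ('k M_elem, 'k) lie_alg) zs \<and> length xs + g \<le> length zs"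
proof -
  obtain ys where ys: "lin_indep (M_gc g c) ys" "set ys \<subseteq> (M_zero_linear g c :: 'k M_elem set)"
    "length xs \<le> length ys"
  proof (cases "S \<subseteq> M_zero_linear g c")
    case True
    then show ?thesis using that xs by blast
  next
    case False
    then obtain x i where "x \<in> S" "M_tensor x [i] \<noteq> (0::'k)"
      using S unfolding abelian_subalg_def lsubspace_def M_zero_linear_def by blast
    then show ?thesis using abelian_indep_noncentral[OF S xs] that by blast
  qed
  then show ?thesis
    using lin_indep_append_gens[OF c ys(1,2)] by (intro exI[of _ "ys @ map (\<lambda>k. M_monom g c (Gen k)) [0..<g]"]) auto
qed

end

section \<open>Dimension count\<close>

lemma enat_le_ldim: "lin_indep L xs \<Longrightarrow> set xs \<subseteq> S \<Longrightarrow> enat (length xs) \<le> ldim L S"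
  unfolding ldim_def by (rule Sup_upper) blast

lemma ldim_le_iff: "ldim L S \<le> d \<longleftrightarrow> (\<forall>xs. lin_indep L xs \<and> set xs \<subseteq> S \<longrightarrow> enat (length xs) \<le> d)"
  unfolding ldim_def by (auto simp: Sup_le_iff)

lemma alpha_le_iff: "alpha L \<le> d \<longleftrightarrow> (\<forall>S. abelian_subalg L S \<longrightarrow> ldim L S \<le> d)"
  unfolding alpha_def by (auto simp: Sup_le_iff)

lemma ldim_le_alpha: "abelian_subalg L S \<Longrightarrow> ldim L S \<le> alpha L"
  unfolding alpha_def by (rule Sup_upper) blast

lemma alpha_eq_ldim_minus:
  assumes extend: "\<And>S xs. abelian_subalg L S \<Longrightarrow> lin_indep L xs \<Longrightarrow> set xs \<subseteq> S \<Longrightarrow>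
      \<exists>zs. lin_indep L zs \<and> length xs + n \<le> length zs"
    and T: "abelian_subalg L T"
    and compress: "\<And>xs. lin_indep L xs \<Longrightarrow> \<exists>ys. lin_indep L ys \<and> set ys \<subseteq> T \<and> length xs \<le> length ys + n"
  shows "alpha L = ldim L (la_carrier L) - enat n"
proof (rule antisym)
  let ?D = "ldim L (la_carrier L)"
  have "enat (length xs) \<le> ?D - enat n"
    if S: "abelian_subalg L S" and xs: "lin_indep L xs" "set xs \<subseteq> S" for S xs
  proof -
    obtain zs where zs: "lin_indep L zs" "length xs + n \<le> length zs" using extend[OF S xs] by blast
    have "enat (length xs) + enat n \<le> enat (length zs)" using zs(2) by simp
    also have "\<dots> \<le> ?D" using enat_le_ldim[OF zs(1) lin_indep_closed[OF zs(1)]] .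
    finally have "enat (length xs) + enat n \<le> ?D" .
    then show ?thesis by (cases ?D) auto
  qed
  then show "alpha L \<le> ?D - enat n" by (auto simp: alpha_le_iff ldim_le_iff)
  have "enat (length xs) \<le> ldim L T + enat n" if xs: "lin_indep L xs" for xs
  proof -
    obtain ys where ys: "lin_indep L ys" "set ys \<subseteq> T" "length xs \<le> length ys + n"
      using compress[OF xs] by blast
    have "enat (length xs) \<le> enat (length ys) + enat n" using ys(3) by simp
    also have "\<dots> \<le> ldim L T + enat n" using enat_le_ldim[OF ys(1,2)] by (rule add_right_mono)
    finally show ?thesis .
  qed
  then have "?D \<le> ldim L T + enat n" by (auto simp: ldim_le_iff)
  then have "?D - enat n \<le> ldim L T" by (cases ?D; cases "ldim L T") auto
  also have "\<dots> \<le> alpha L" by (rule ldim_le_alpha[OF T])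
  finally show "?D - enat n \<le> alpha L" .
qed

theorem corollary5p3:
  fixes g c :: nat
  assumes "g \<ge> 3" and "c \<ge> 3"
  shows "alpha (M_gc g c :: (_, 'k::field_char_0) lie_alg)
           = ldim (M_gc g c :: (_, 'k) lie_alg) (la_carrier (M_gc g c :: (_, 'k) lie_alg)) - enat g"
proof (rule alpha_eq_ldim_minus[where T = "M_zero_linear g c"])
  show "abelian_subalg (M_gc g c) (M_zero_linear g c :: 'k M_elem set)"
    by (rule abelian_M_zero_linear[OF assms(2)])
  show "\<exists>zs. lin_indep (M_gc g c :: ('k M_elem, 'k) lie_alg) zs \<and> length xs + g \<le> length zs"
    if "abelian_subalg (M_gc g c) S" "lin_indep (M_gc g c :: ('k M_elem, 'k) lie_alg) xs" "set xs \<subseteq> S"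
    for S xs
    using abelian_indep_extend[OF assms(2) _ that] assms(1) by simp
  show "\<exists>ys. lin_indep (M_gc g c) ys \<and> set ys \<subseteq> (M_zero_linear g c :: 'k M_elem set)
      \<and> length xs \<le> length ys + g"
    if "lin_indep (M_gc g c :: ('k M_elem, 'k) lie_alg) xs" for xs
    by (rule lin_indep_compress[OF assms(2) that])
qed

end
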